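(* Let $\mathcal A=\{1,\dots,m\}$, let $\mathbb X=\mathcal A^{\mathbb Z}$ be the full shift with left shift $S$, let $\mu_0$ be a probability measure on $\mathcal A$ with $\mu_0(\{a\})>0$ for all $a\in\mathcal A$, and let $\mu=\mu_0^{\mathbb Z}$. Let $f_1:\mathbb X\to\mathbb R$ be locally constant of window size $1$, i.e. $f_1(x)=g(x_n)$ for some fixed $n\in\mathbb Z$ and $g:\mathcal A\to\mathbb R$; let $V_x(k)=f_1(S^kx)$, $H_x=\Delta+V_x$, and let $V_{\mathrm{per}}:\mathbb Z\to\mathbb R$ have period two. For $a,b\in\mathcal A$ let $x_{ab}\in\mathbb X$ be given by $(x_{ab})_{2n}=a$, $(x_{ab})_{2n+1}=b$ for all $n\in\mathbb Z$. Then for $\mu$-almost every $x\in\mathbb X$, $$\sigma(H_x+V_{\mathrm{per}})=\bigcup_{a,b\in\mathcal A}\sigma(H_{x_{ab}}+V_{\mathrm{per}}).$$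
   Context: $\Delta$ is the discrete Laplacian $(\Delta\psi)(n)=\psi(n+1)+\psi(n-1)$ on $\ell^2(\mathbb Z)$; $(Sx)_n=x_{n+1}$. *)

theory Defs
  imports "HOL-Probability.Probability"
begin

definition l2 :: "(int \<Rightarrow> complex) set" where
  "l2 = {\<psi>. (\<lambda>k. (cmod (\<psi> k))^2) summable_on UNIV}"

definition l2norm :: "(int \<Rightarrow> complex) \<Rightarrow> real" where
  "l2norm \<psi> = sqrt (\<Sum>\<^sub>\<infinity>k. (cmod (\<psi> k))^2)"

definition laplacian :: "(int \<Rightarrow> complex) \<Rightarrow> (int \<Rightarrow> complex)" where
  "laplacian \<psi> = (\<lambda>k. \<psi> (k + 1) + \<psi> (k - 1))"

definition mult_op :: "(int \<Rightarrow> real) \<Rightarrow> (int \<Rightarrow> complex) \<Rightarrow> (int \<Rightarrow> complex)" where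
  "mult_op V \<psi> = (\<lambda>k. complex_of_real (V k) * \<psi> k)"

definition spectrum_op :: "((int \<Rightarrow> complex) \<Rightarrow> (int \<Rightarrow> complex)) \<Rightarrow> complex set" where
  "spectrum_op T = {E. \<not> (\<exists>R.
      (\<forall>\<psi>\<in>l2. R \<psi> \<in> l2
              \<and> (\<lambda>k. T (R \<psi>) k - E * R \<psi> k) = \<psi>
              \<and> R (\<lambda>k. T \<psi> k - E * \<psi> k) = \<psi>)
      \<and> (\<exists>C. \<forall>\<psi>\<in>l2. l2norm (R \<psi>) \<le> C * l2norm \<psi>))}"

definition Sshift :: "int \<Rightarrow> (int \<Rightarrow> 'a) \<Rightarrow> (int \<Rightarrow> 'a)" where
  "Sshift k x = (\<lambda>j. x (j + k))"

definition xab :: "'a \<Rightarrow> 'a \<Rightarrow> (int \<Rightarrow> 'a)" where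
  "xab a b = (\<lambda>j. if even j then a else b)"

end

theory Submission
  imports Defs
begin

(* Write V = g (x (. + n)) + Vper. Its values at even sites lie in the finite set U0 of the numbers
   g a + Vper 0, those at odd sites in U1 (the g a + Vper 1), and the spectrum of the period-two
   operator with values u, v is the band of all E with 0 <= (E - u) (E - v) <= 4.

   If E lies in no band of a pair (u, v) in U0 x U1, then H_x - E is invertible for every x: for
   non-real E by a Neumann series for psi - i r (H - E) psi, and for real E because eliminating the
   neighbours k + 1, k - 1 leaves a stride-two Jacobi operator that is uniformly strictly diagonally
   dominant. Conversely, almost surely every word of the form abab...ab occurs in x (the events of
   missing it on disjoint windows are independent with probability bounded away from 1), and on such
   windows truncated Bloch waves of the periodic operator are approximate eigenvectors of H_x. *)

definition l2sq :: "(int \<Rightarrow> complex) \<Rightarrow> real" where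
  "l2sq \<psi> = (\<Sum>\<^sub>\<infinity>k. (cmod (\<psi> k))^2)"

lemma l2norm_eq_sqrt_l2sq: "l2norm \<psi> = sqrt (l2sq \<psi>)"
  by (simp add: l2norm_def l2sq_def)

lemma l2sq_nonneg: "0 \<le> l2sq \<psi>"
  by (simp add: l2sq_def infsum_nonneg)

lemma l2norm_nonneg: "0 \<le> l2norm \<psi>"
  by (simp add: l2norm_eq_sqrt_l2sq l2sq_nonneg)

lemma l2sq_eq_l2norm_sq: "l2sq \<psi> = (l2norm \<psi>)^2"
  by (simp add: l2norm_eq_sqrt_l2sq l2sq_nonneg)

lemma l2norm_le_iff_l2sq_le: "0 \<le> B \<Longrightarrow> l2norm \<psi> \<le> B \<longleftrightarrow> l2sq \<psi> \<le> B^2"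
  using l2sq_nonneg[of \<psi>] by (auto simp: l2norm_eq_sqrt_l2sq intro: sqrt_le_D real_le_lsqrt)

lemma sum_le_l2sq:
  assumes "\<psi> \<in> l2" "finite S"
  shows "(\<Sum>k\<in>S. (cmod (\<psi> k))^2) \<le> l2sq \<psi>"
  using assms unfolding l2_def l2sq_def by (intro finite_sum_le_infsum) auto

lemma l2_if_bounded_sums:
  assumes "\<And>S. finite S \<Longrightarrow> (\<Sum>k\<in>S. (cmod (\<psi> k))^2) \<le> B"
  shows "\<psi> \<in> l2" "l2sq \<psi> \<le> B"
proof -
  have summable: "(\<lambda>k. (cmod (\<psi> k))^2) summable_on UNIV"
    by (rule nonneg_bdd_above_summable_on) (auto intro!: bdd_aboveI2 assms)
  then show "\<psi> \<in> l2" by (simp add: l2_def)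
  show "l2sq \<psi> \<le> B" unfolding l2sq_def
    by (rule infsum_le_finite_sums[OF summable]) (auto intro: assms)
qed

lemma norm_le_l2norm: "\<psi> \<in> l2 \<Longrightarrow> cmod (\<psi> k) \<le> l2norm \<psi>"
  using sum_le_l2sq[of \<psi> "{k}"] by (simp add: l2norm_eq_sqrt_l2sq real_le_rsqrt)

lemma l2_finite_support:
  assumes "finite S" "\<And>k. k \<notin> S \<Longrightarrow> \<psi> k = 0"
  shows "\<psi> \<in> l2" "l2sq \<psi> = (\<Sum>k\<in>S. (cmod (\<psi> k))^2)"
proof -
  have "(\<lambda>k. (cmod (\<psi> k))^2) summable_on UNIV \<longleftrightarrow> (\<lambda>k. (cmod (\<psi> k))^2) summable_on S"
    by (rule summable_on_cong_neutral) (auto simp: assms)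
  then show "\<psi> \<in> l2" using assms by (simp add: l2_def)
  have "l2sq \<psi> = (\<Sum>\<^sub>\<infinity>k\<in>S. (cmod (\<psi> k))^2)" unfolding l2sq_def
    by (rule infsum_cong_neutral) (auto simp: assms)
  then show "l2sq \<psi> = (\<Sum>k\<in>S. (cmod (\<psi> k))^2)" using assms by simp
qed

lemma l2_eq_0_if_contraction:
  assumes "\<psi> \<in> l2" "l2norm \<psi> \<le> \<theta> * l2norm \<psi>" "\<theta> < 1"
  shows "\<psi> = (\<lambda>k. 0)"
proof
  fix k
  have "(1 - \<theta>) * l2norm \<psi> \<le> 0" using assms(2) by (simp add: algebra_simps)
  then have "l2norm \<psi> \<le> 0" using assms(3) by (simp add: mult_le_0_iff)
  then show "\<psi> k = 0" using norm_le_l2norm[OF assms(1), of k] by (metis norm_le_zero_iff order_trans)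
qed

lemma sum_shift_le_l2sq:
  assumes "f \<in> l2" "finite S"
  shows "(\<Sum>k\<in>S. (cmod (f (k + i)))^2) \<le> l2sq f"
proof -
  have "(\<Sum>k\<in>S. (cmod (f (k + i)))^2) = (\<Sum>k\<in>(\<lambda>k. k + i) ` S. (cmod (f k))^2)"
    by (subst sum.reindex) (auto simp: inj_on_def)
  also have "\<dots> \<le> l2sq f" using assms by (intro sum_le_l2sq) auto
  finally show ?thesis .
qed

lemma l2_if_dominated_by_translates:
  assumes F: "finite F" and f: "f \<in> l2" and M: "0 \<le> M"
    and dom: "\<And>k. cmod (\<psi> k) \<le> (\<Sum>i\<in>F. M * cmod (f (k + i)))"
  shows "\<psi> \<in> l2" "l2norm \<psi> \<le> M * card F * l2norm f"
proof -
  have sums: "(\<Sum>k\<in>S. (cmod (\<psi> k))^2) \<le> (M * card F)^2 * l2sq f" if S: "finite S" for S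
  proof -
    have "(\<Sum>k\<in>S. (cmod (\<psi> k))^2) \<le> (\<Sum>k\<in>S. (\<Sum>i\<in>F. M * cmod (f (k + i)))^2)"
      by (intro sum_mono power_mono dom) auto
    also have "\<dots> \<le> (\<Sum>k\<in>S. (\<Sum>i\<in>F. (M * cmod (f (k + i)))^2) * card F)"
      by (intro sum_mono sum_squared_le_sum_of_squares)
    also have "\<dots> = M^2 * card F * (\<Sum>i\<in>F. (\<Sum>k\<in>S. (cmod (f (k + i)))^2))"
      by (simp add: sum_distrib_left sum_distrib_right power_mult_distrib sum.swap[of _ S] mult_ac)
    also have "\<dots> \<le> M^2 * card F * (\<Sum>i\<in>F. l2sq f)"
      by (intro mult_left_mono sum_mono sum_shift_le_l2sq f S) auto
    also have "\<dots> = (M * card F)^2 * l2sq f"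
      by (simp add: power2_eq_square)
    finally show ?thesis .
  qed
  show "\<psi> \<in> l2" by (rule l2_if_bounded_sums(1)) (rule sums)
  have "l2sq \<psi> \<le> (M * card F * l2norm f)^2"
    using l2_if_bounded_sums(2)[OF sums] by (simp add: l2sq_eq_l2norm_sq power_mult_distrib)
  then show "l2norm \<psi> \<le> M * card F * l2norm f"
    using M by (simp add: l2norm_le_iff_l2sq_le l2norm_nonneg)
qed

lemma l2_mult:
  assumes m: "\<And>k. cmod (m k) \<le> K" and f: "f \<in> l2"
  shows "(\<lambda>k. m k * f k) \<in> l2" "l2norm (\<lambda>k. m k * f k) \<le> K * l2norm f"
proof -
  have K: "0 \<le> K" using m[of 0] norm_ge_zero order_trans by blast
  have "cmod (m k * f k) \<le> (\<Sum>i\<in>{0}. K * cmod (f (k + i)))" for k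
    using m[of k] by (simp add: norm_mult mult_right_mono)
  from l2_if_dominated_by_translates[OF _ f K this]
  show "(\<lambda>k. m k * f k) \<in> l2" "l2norm (\<lambda>k. m k * f k) \<le> K * l2norm f" by simp_all
qed

lemma l2_add:
  assumes "f \<in> l2" "g \<in> l2"
  shows "(\<lambda>k. f k + g k) \<in> l2" "l2norm (\<lambda>k. f k + g k) \<le> l2norm f + l2norm g"
proof -
  have sums: "(\<Sum>k\<in>S. (cmod (f k + g k))^2) \<le> (l2norm f + l2norm g)^2" if S: "finite S" for S
  proof -
    have "L2_set (\<lambda>k. cmod (f k + g k)) S \<le> L2_set (\<lambda>k. cmod (f k) + cmod (g k)) S"
      by (rule L2_set_mono) (auto simp: norm_triangle_ineq)
    also have "\<dots> \<le> L2_set (\<lambda>k. cmod (f k)) S + L2_set (\<lambda>k. cmod (g k)) S"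
      by (rule L2_set_triangle_ineq)
    also have "\<dots> \<le> l2norm f + l2norm g"
      using S assms by (auto simp: L2_set_def l2norm_eq_sqrt_l2sq intro!: add_mono sum_le_l2sq)
    finally have "sqrt (\<Sum>k\<in>S. (cmod (f k + g k))^2) \<le> l2norm f + l2norm g"
      by (simp add: L2_set_def)
    then show ?thesis by (rule sqrt_le_D)
  qed
  show "(\<lambda>k. f k + g k) \<in> l2" by (rule l2_if_bounded_sums(1)) (rule sums)
  show "l2norm (\<lambda>k. f k + g k) \<le> l2norm f + l2norm g"
    using l2_if_bounded_sums(2)[OF sums]
    by (simp add: l2norm_le_iff_l2sq_le l2norm_nonneg)
qed

lemma l2_diff:
  assumes "f \<in> l2" "g \<in> l2"
  shows "(\<lambda>k. f k - g k) \<in> l2"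
  using l2_add(1)[OF assms(1) l2_mult(1)[OF _ assms(2), of "\<lambda>_. -1" 1]] by simp

lemma l2_pointwise_limit:
  assumes lim: "\<And>k. (\<lambda>M. P M k) \<longlonglongrightarrow> \<psi> k"
    and bound: "\<And>M. P M \<in> l2 \<and> l2norm (P M) \<le> B"
  shows "\<psi> \<in> l2" "l2norm \<psi> \<le> B"
proof -
  have B: "0 \<le> B" using bound[of 0] l2norm_nonneg order_trans by blast
  have sums: "(\<Sum>k\<in>S. (cmod (\<psi> k))^2) \<le> B^2" if S: "finite S" for S
  proof (rule LIMSEQ_le_const2)
    show "(\<lambda>M. \<Sum>k\<in>S. (cmod (P M k))^2) \<longlonglongrightarrow> (\<Sum>k\<in>S. (cmod (\<psi> k))^2)"
      by (intro tendsto_sum tendsto_power tendsto_norm lim)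
    have "(\<Sum>k\<in>S. (cmod (P M k))^2) \<le> B^2" for M
      using sum_le_l2sq[OF _ S, of "P M"] bound[of M] B
      by (simp add: l2norm_le_iff_l2sq_le)
    then show "\<exists>N. \<forall>M\<ge>N. (\<Sum>k\<in>S. (cmod (P M k))^2) \<le> B^2" by blast
  qed
  show "\<psi> \<in> l2" by (rule l2_if_bounded_sums(1)) (rule sums)
  show "l2norm \<psi> \<le> B"
    using l2_if_bounded_sums(2)[OF sums] B by (simp add: l2norm_le_iff_l2sq_le)
qed

lemma l2_geometric_series:
  assumes g: "\<And>m. g m \<in> l2" "\<And>m. l2norm (g m) \<le> \<theta>^m * c" and \<theta>: "0 \<le> \<theta>" "\<theta> < 1"
  shows "\<And>k. summable (\<lambda>m. g m k)" "(\<lambda>k. \<Sum>m. g m k) \<in> l2" "l2norm (\<lambda>k. \<Sum>m. g m k) \<le> c / (1 - \<theta>)"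
proof -
  have "l2norm (g 0) \<le> c" using g(2)[of 0] by simp
  with l2norm_nonneg[of "g 0"] have c: "0 \<le> c" by linarith
  show summable: "summable (\<lambda>m. g m k)" for k
  proof (rule summable_comparison_test)
    show "summable (\<lambda>m. \<theta>^m * c)" using \<theta> by (intro summable_mult2 summable_geometric) auto
    show "\<exists>N. \<forall>m\<ge>N. norm (g m k) \<le> \<theta>^m * c" using norm_le_l2norm g order_trans by blast
  qed
  define P where "P M = (\<lambda>k. \<Sum>m<M. g m k)" for M
  have P: "P M \<in> l2 \<and> l2norm (P M) \<le> (\<Sum>m<M. \<theta>^m) * c" for M
  proof (induction M)
    case 0
    then show ?case using l2_finite_support[of "{}" "P 0"] by (simp add: P_def l2norm_eq_sqrt_l2sq)
  next
    case (Suc M)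
    then show ?case using l2_add[of "P M" "g M"] g[of M] by (auto simp: P_def algebra_simps)
  qed
  have "(\<Sum>m<M. \<theta>^m) \<le> 1 / (1 - \<theta>)" for M
    using sum_le_suminf[of "\<lambda>m. \<theta>^m" "{..<M}"] suminf_geometric[of \<theta>] \<theta>
    by (simp add: summable_geometric)
  then have bound: "P M \<in> l2 \<and> l2norm (P M) \<le> c / (1 - \<theta>)" for M
    using P[of M] mult_right_mono[OF _ c, of "\<Sum>m<M. \<theta>^m" "1 / (1 - \<theta>)"] by simp
  have "(\<lambda>M. P M k) \<longlonglongrightarrow> (\<Sum>m. g m k)" for k
    unfolding P_def by (rule summable_LIMSEQ[OF summable])
  from l2_pointwise_limit[where P = P and \<psi> = "\<lambda>k. \<Sum>m. g m k", OF this bound]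
  show "(\<lambda>k. \<Sum>m. g m k) \<in> l2" "l2norm (\<lambda>k. \<Sum>m. g m k) \<le> c / (1 - \<theta>)" .
qed

(* The fixed point is the Neumann series of L applied to f; the banded form of L lets it
   commute with the pointwise limit of the series. *)
lemma neumann_series_fixpoint:
  fixes L :: "(int \<Rightarrow> complex) \<Rightarrow> int \<Rightarrow> complex"
  assumes F: "finite F" and L: "\<And>\<psi> k. L \<psi> k = (\<Sum>i\<in>F. a k i * \<psi> (k + i))"
    and contr: "\<And>\<psi>. \<psi> \<in> l2 \<Longrightarrow> L \<psi> \<in> l2 \<and> l2norm (L \<psi>) \<le> \<theta> * l2norm \<psi>"
    and \<theta>: "0 \<le> \<theta>" "\<theta> < 1" and f: "f \<in> l2"
  shows "\<exists>\<psi>\<in>l2. (\<forall>k. \<psi> k = f k + L \<psi> k) \<and> l2norm \<psi> \<le> l2norm f / (1 - \<theta>)"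
proof -
  define g where "g m = (L ^^ m) f" for m
  have g: "g m \<in> l2 \<and> l2norm (g m) \<le> \<theta>^m * l2norm f" for m
  proof (induction m)
    case (Suc m)
    then show ?case
      using contr[of "g m"] mult_left_mono[OF _ \<theta>(1), of "l2norm (g m)" "\<theta>^m * l2norm f"]
      by (auto simp: g_def)
  qed (simp add: g_def f)
  note series = l2_geometric_series[of g \<theta> "l2norm f", OF conjunct1[OF g] conjunct2[OF g] \<theta>]
  define \<psi> where "\<psi> k = (\<Sum>m. g m k)" for k
  have "\<psi> k = f k + L \<psi> k" for k
  proof -
    have "L \<psi> k = (\<Sum>i\<in>F. (\<Sum>m. a k i * g m (k + i)))"
      by (simp add: L \<psi>_def suminf_mult series(1))
    also have "\<dots> = (\<Sum>m. \<Sum>i\<in>F. a k i * g m (k + i))"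
      by (intro suminf_sum[symmetric] summable_mult series(1))
    also have "\<dots> = (\<Sum>m. g (Suc m) k)" by (simp add: g_def L)
    also have "\<dots> = \<psi> k - g 0 k" unfolding \<psi>_def by (rule suminf_split_head[OF series(1)])
    finally show ?thesis by (simp add: g_def)
  qed
  moreover have "\<psi> \<in> l2" "l2norm \<psi> \<le> l2norm f / (1 - \<theta>)"
    using series(2,3) by (simp_all add: \<psi>_def[abs_def])
  ultimately show ?thesis by blast
qed

definition schr :: "(int \<Rightarrow> real) \<Rightarrow> (int \<Rightarrow> complex) \<Rightarrow> int \<Rightarrow> complex" where
  "schr V \<psi> = (\<lambda>k. \<psi> (k + 1) + \<psi> (k - 1) + of_real (V k) * \<psi> k)"

lemma schr_minus_l2:
  assumes V: "\<And>k. \<bar>V k\<bar> \<le> B" and \<psi>: "\<psi> \<in> l2"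
  shows "(\<lambda>k. schr V \<psi> k - E * \<psi> k) \<in> l2"
    "l2norm (\<lambda>k. schr V \<psi> k - E * \<psi> k) \<le> 3 * (1 + B + cmod E) * l2norm \<psi>"
proof -
  define M where "M = 1 + B + cmod E"
  have M: "0 \<le> M" using V[of 0] by (simp add: M_def add_nonneg_nonneg)
  have dom: "cmod (schr V \<psi> k - E * \<psi> k) \<le> (\<Sum>i\<in>{-1,0,1}. M * cmod (\<psi> (k + i)))" for k
  proof -
    have "cmod (of_real (V k) - E) \<le> M"
      using V[of k] norm_triangle_ineq4[of "of_real (V k)" E] by (simp add: M_def)
    then have "cmod ((of_real (V k) - E) * \<psi> k) \<le> M * cmod (\<psi> k)"
      by (simp add: norm_mult mult_right_mono)
    moreover have "cmod (\<psi> (k + 1)) \<le> M * cmod (\<psi> (k + 1))" "cmod (\<psi> (k - 1)) \<le> M * cmod (\<psi> (k - 1))"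
      using V[of k] by (auto simp: M_def intro!: mult_le_cancel_right1[THEN iffD2])
    moreover have "schr V \<psi> k - E * \<psi> k = (\<psi> (k + 1) + \<psi> (k - 1)) + (of_real (V k) - E) * \<psi> k"
      by (simp add: schr_def algebra_simps)
    then have "cmod (schr V \<psi> k - E * \<psi> k)
        \<le> cmod (\<psi> (k + 1) + \<psi> (k - 1)) + cmod ((of_real (V k) - E) * \<psi> k)"
      by (simp only: norm_triangle_ineq)
    moreover have "cmod (\<psi> (k + 1) + \<psi> (k - 1)) \<le> cmod (\<psi> (k + 1)) + cmod (\<psi> (k - 1))"
      by (rule norm_triangle_ineq)
    moreover have "(\<Sum>i\<in>{-1,0,1}. M * cmod (\<psi> (k + i)))
        = M * cmod (\<psi> (k - 1)) + M * cmod (\<psi> k) + M * cmod (\<psi> (k + 1))"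
      by simp
    ultimately show ?thesis by linarith
  qed
  have "real (card {-1, 0, 1 :: int}) = 3" by simp
  with l2_if_dominated_by_translates[OF _ \<psi> M dom]
  show "(\<lambda>k. schr V \<psi> k - E * \<psi> k) \<in> l2"
    "l2norm (\<lambda>k. schr V \<psi> k - E * \<psi> k) \<le> 3 * (1 + B + cmod E) * l2norm \<psi>"
    by (simp_all add: M_def mult.commute)
qed

lemma not_in_spectrum_schrI:
  assumes V: "\<And>k. \<bar>V k\<bar> \<le> B"
    and inj: "\<And>\<psi>. \<psi> \<in> l2 \<Longrightarrow> (\<And>k. schr V \<psi> k = E * \<psi> k) \<Longrightarrow> \<psi> = (\<lambda>k. 0)"
    and surj: "\<And>f. f \<in> l2 \<Longrightarrow> \<exists>\<psi>\<in>l2. (\<forall>k. schr V \<psi> k - E * \<psi> k = f k) \<and> l2norm \<psi> \<le> C * l2norm f"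
  shows "E \<notin> spectrum_op (schr V)"
proof -
  define A where "A \<psi> = (\<lambda>k. schr V \<psi> k - E * \<psi> k)" for \<psi>
  define R where "R f = (SOME \<psi>. \<psi> \<in> l2 \<and> A \<psi> = f \<and> l2norm \<psi> \<le> C * l2norm f)" for f
  have R: "R f \<in> l2 \<and> A (R f) = f \<and> l2norm (R f) \<le> C * l2norm f" if f: "f \<in> l2" for f
  proof -
    obtain \<psi> where "\<psi> \<in> l2" "\<forall>k. schr V \<psi> k - E * \<psi> k = f k" "l2norm \<psi> \<le> C * l2norm f"
      using surj[OF f] by blast
    then have "\<psi> \<in> l2 \<and> A \<psi> = f \<and> l2norm \<psi> \<le> C * l2norm f" by (simp add: A_def fun_eq_iff)
    then show ?thesis
      unfolding R_def by (rule someI[where P = "\<lambda>\<psi>. \<psi> \<in> l2 \<and> A \<psi> = f \<and> l2norm \<psi> \<le> C * l2norm f"])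
  qed
  have "R (A \<psi>) = \<psi>" if \<psi>: "\<psi> \<in> l2" for \<psi>
  proof -
    have RA: "R (A \<psi>) \<in> l2" "A (R (A \<psi>)) = A \<psi>"
      using R schr_minus_l2(1)[OF V \<psi>] by (auto simp: A_def)
    have "A (\<lambda>j. \<phi> j - \<xi> j) = (\<lambda>k. A \<phi> k - A \<xi> k)" for \<phi> \<xi>
      by (simp add: A_def schr_def fun_eq_iff algebra_simps)
    then have "A (\<lambda>j. R (A \<psi>) j - \<psi> j) = (\<lambda>k. 0)" by (simp add: RA(2))
    then have "\<And>k. schr V (\<lambda>j. R (A \<psi>) j - \<psi> j) k = E * (R (A \<psi>) k - \<psi> k)"
      by (simp add: A_def fun_eq_iff)
    then have "(\<lambda>j. R (A \<psi>) j - \<psi> j) = (\<lambda>k. 0)" using inj l2_diff[OF RA(1) \<psi>] by blast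
    then show ?thesis by (auto simp: fun_eq_iff dest: fun_cong)
  qed
  with R show ?thesis unfolding spectrum_op_def A_def by auto
qed

lemma has_sum_int_shift:
  fixes u :: "int \<Rightarrow> 'a::topological_comm_monoid_add"
  assumes "(u has_sum S) UNIV"
  shows "((\<lambda>k. u (k + c)) has_sum S) UNIV"
proof -
  have "bij_betw (\<lambda>k. k + c) UNIV UNIV"
    by (rule bij_betwI[of _ _ _ "\<lambda>k. k - c"]) auto
  then show ?thesis using assms has_sum_reindex_bij_betw by blast
qed

lemma has_sum_telescope_int:
  fixes u :: "int \<Rightarrow> real"
  assumes "u summable_on UNIV"
  shows "((\<lambda>k. u k - u (k - 1)) has_sum 0) UNIV"
proof -
  obtain S where u: "(u has_sum S) UNIV" using assms summable_on_def by blast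
  have "((\<lambda>k. - u (k + -1)) has_sum - S) UNIV" by (rule has_sum_uminusI[OF has_sum_int_shift[OF u]])
  from has_sum_add[OF u this] show ?thesis by simp
qed

lemma summable_on_Im_cnj_succ:
  assumes "\<phi> \<in> l2"
  shows "(\<lambda>k. Im (cnj (\<phi> k) * \<phi> (k + 1))) summable_on UNIV"
proof -
  define P where "P k = (cmod (\<phi> k))^2" for k
  have hP: "(P has_sum l2sq \<phi>) UNIV" using assms by (simp add: l2_def P_def[abs_def] l2sq_def)
  have "(\<lambda>k. norm (Im (cnj (\<phi> k) * \<phi> (k + 1)))) summable_on UNIV"
  proof (rule Infinite_Sum.abs_summable_on_comparison_test')
    show "(\<lambda>k. P k + P (k + 1)) summable_on UNIV"
      using hP has_sum_int_shift[OF hP] by (intro summable_on_add) (auto dest: has_sum_imp_summable)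
    fix k
    have "\<bar>Im (cnj (\<phi> k) * \<phi> (k + 1))\<bar> \<le> cmod (\<phi> k) * cmod (\<phi> (k + 1))"
      using abs_Im_le_cmod[of "cnj (\<phi> k) * \<phi> (k + 1)"] by (simp add: norm_mult)
    also have "\<dots> \<le> P k + P (k + 1)"
      using sum_squares_bound[of "cmod (\<phi> k)" "cmod (\<phi> (k + 1))"]
        mult_nonneg_nonneg[OF norm_ge_zero norm_ge_zero, of "\<phi> k" "\<phi> (k + 1)"]
      unfolding P_def by linarith
    finally show "norm (Im (cnj (\<phi> k) * \<phi> (k + 1))) \<le> P k + P (k + 1)" by simp
  qed
  then show ?thesis by (rule Infinite_Sum.abs_summable_summable)
qed

(* Self-adjointness in disguise: the cross term of the square is 2 r Im E times the squared norm
   of phi, up to a telescoping sum. *)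
lemma l2sq_id_minus_ii_schr:
  fixes E :: complex and r :: real
  assumes V: "\<And>k. \<bar>V k\<bar> \<le> B" and \<phi>: "\<phi> \<in> l2"
  defines "b \<equiv> (\<lambda>k. schr V \<phi> k - E * \<phi> k)"
  shows "(\<lambda>k. \<phi> k - \<i> * of_real r * b k) \<in> l2"
    "l2sq (\<lambda>k. \<phi> k - \<i> * of_real r * b k) = (1 - 2 * r * Im E) * l2sq \<phi> + r^2 * l2sq b"
proof -
  define P where "P k = (cmod (\<phi> k))^2" for k
  define Q where "Q k = (cmod (b k))^2" for k
  define u where "u k = Im (cnj (\<phi> k) * \<phi> (k + 1))" for k
  have b: "b \<in> l2" using schr_minus_l2(1)[OF V \<phi>] by (simp add: b_def)
  have norm_sq: "(cmod (\<phi> k - \<i> * of_real r * b k))^2 = P k + r^2 * Q k + 2 * r * Im (cnj (\<phi> k) * b k)" for k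
    unfolding P_def Q_def cmod_power2 by (simp add: algebra_simps power2_eq_square)
  have cross: "Im (cnj (\<phi> k) * b k) = u k - u (k - 1) - Im E * P k" for k
    unfolding P_def cmod_power2 by (simp add: b_def schr_def u_def algebra_simps power2_eq_square)
  have pointwise: "(cmod (\<phi> k - \<i> * of_real r * b k))^2
      = (1 - 2 * r * Im E) * P k + r^2 * Q k + 2 * r * (u k - u (k - 1))" for k
    unfolding norm_sq cross by (simp add: algebra_simps)
  have hP: "(P has_sum l2sq \<phi>) UNIV" using \<phi> by (simp add: l2_def P_def[abs_def] l2sq_def)
  have hQ: "(Q has_sum l2sq b) UNIV" using b by (simp add: l2_def Q_def[abs_def] l2sq_def)
  have "((\<lambda>k. u k - u (k - 1)) has_sum 0) UNIV"
    unfolding u_def by (rule has_sum_telescope_int[OF summable_on_Im_cnj_succ[OF \<phi>]])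
  from has_sum_add[OF has_sum_add[OF has_sum_cmult_right[OF hP] has_sum_cmult_right[OF hQ]]
      has_sum_cmult_right[OF this]]
  have "((\<lambda>k. (cmod (\<phi> k - \<i> * of_real r * b k))^2) has_sum
      ((1 - 2 * r * Im E) * l2sq \<phi> + r^2 * l2sq b)) UNIV"
    unfolding pointwise by simp
  then show "(\<lambda>k. \<phi> k - \<i> * of_real r * b k) \<in> l2"
    "l2sq (\<lambda>k. \<phi> k - \<i> * of_real r * b k) = (1 - 2 * r * Im E) * l2sq \<phi> + r^2 * l2sq b"
    by (auto simp: l2_def l2sq_def infsumI dest: has_sum_imp_summable)
qed

lemma id_minus_ii_schr_contraction:
  fixes E :: complex
  assumes V: "\<And>k. \<bar>V k\<bar> \<le> B" and \<phi>: "\<phi> \<in> l2"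
  defines "M \<equiv> 3 * (1 + B + cmod E)"
  defines "T \<equiv> (\<lambda>k. \<phi> k - \<i> * of_real (Im E / M^2) * (schr V \<phi> k - E * \<phi> k))"
  shows "T \<in> l2" "l2norm T \<le> sqrt (1 - (Im E / M)^2) * l2norm \<phi>"
proof -
  define r where "r = Im E / M^2"
  define b where "b = (\<lambda>k. schr V \<phi> k - E * \<phi> k)"
  have "\<bar>Im E\<bar> < M" using abs_Im_le_cmod[of E] V[of 0] by (simp add: M_def)
  moreover from this have M: "0 < M" using abs_ge_zero[of "Im E"] by linarith
  ultimately have "(Im E / M)^2 \<le> 1" by (simp add: abs_square_le_1 abs_divide)
  then have \<theta>_sq: "(sqrt (1 - (Im E / M)^2))^2 = 1 - (Im E / M)^2" by simp
  have "l2norm b \<le> M * l2norm \<phi>" using schr_minus_l2(2)[OF V \<phi>] by (simp add: b_def M_def)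
  then have "l2sq b \<le> M^2 * l2sq \<phi>"
    by (simp add: l2sq_eq_l2norm_sq power_mult_distrib[symmetric] l2norm_nonneg power_mono)
  then have "(1 - 2 * r * Im E) * l2sq \<phi> + r^2 * l2sq b \<le> (1 - 2 * r * Im E) * l2sq \<phi> + r^2 * (M^2 * l2sq \<phi>)"
    by (simp add: mult_left_mono)
  also have "\<dots> = (sqrt (1 - (Im E / M)^2))^2 * l2sq \<phi>"
    unfolding \<theta>_sq using M by (simp add: r_def power_divide field_simps power2_eq_square)
  finally have "l2sq T \<le> (sqrt (1 - (Im E / M)^2) * l2norm \<phi>)^2"
    using l2sq_id_minus_ii_schr(2)[where V = V and E = E and r = r, OF V \<phi>]
    by (simp add: T_def r_def b_def l2sq_eq_l2norm_sq power_mult_distrib)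
  moreover have "0 \<le> sqrt (1 - (Im E / M)^2)" using \<open>(Im E / M)^2 \<le> 1\<close> by simp
  ultimately show "l2norm T \<le> sqrt (1 - (Im E / M)^2) * l2norm \<phi>"
    by (simp add: l2norm_le_iff_l2sq_le l2norm_nonneg)
  show "T \<in> l2"
    using l2sq_id_minus_ii_schr(1)[where V = V and E = E and r = r, OF V \<phi>] by (simp add: T_def r_def)
qed

lemma nonreal_not_in_spectrum_schr:
  assumes V: "\<And>k. \<bar>V k\<bar> \<le> B" and E: "Im E \<noteq> 0"
  shows "E \<notin> spectrum_op (schr V)"
proof -
  define M where "M = 3 * (1 + B + cmod E)"
  define z where "z = \<i> * complex_of_real (Im E / M^2)"
  define \<theta> where "\<theta> = sqrt (1 - (Im E / M)^2)"
  define T where "T \<phi> = (\<lambda>k. \<phi> k - z * (schr V \<phi> k - E * \<phi> k))" for \<phi>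
  have "\<bar>Im E\<bar> < M" using abs_Im_le_cmod[of E] V[of 0] by (simp add: M_def)
  moreover from this have M: "0 < M" using abs_ge_zero[of "Im E"] by linarith
  ultimately have "0 < (Im E / M)^2" "(Im E / M)^2 < 1" using E by (auto simp: abs_square_less_1 abs_divide)
  then have \<theta>: "0 \<le> \<theta>" "\<theta> < 1" by (auto simp: \<theta>_def)
  have z: "z \<noteq> 0" using E M by (simp add: z_def)
  have contraction: "T \<phi> \<in> l2 \<and> l2norm (T \<phi>) \<le> \<theta> * l2norm \<phi>" if "\<phi> \<in> l2" for \<phi>
    using id_minus_ii_schr_contraction[OF V that, where E = E]
    by (simp add: T_def z_def \<theta>_def M_def mult.assoc)
  show ?thesis
  proof (rule not_in_spectrum_schrI[OF V])
    fix \<psi> assume \<psi>: "\<psi> \<in> l2" and "\<And>k. schr V \<psi> k = E * \<psi> k"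
    then have "T \<psi> = \<psi>" by (simp add: T_def)
    with contraction[OF \<psi>] \<theta> show "\<psi> = (\<lambda>k. 0)" by (intro l2_eq_0_if_contraction[OF \<psi>]) auto
  next
    fix f :: "int \<Rightarrow> complex" assume f: "f \<in> l2"
    have zf: "(\<lambda>k. z * f k) \<in> l2" "l2norm (\<lambda>k. z * f k) \<le> cmod z * l2norm f"
      using l2_mult[OF _ f, of "\<lambda>_. z"] by auto
    have "\<exists>\<psi>\<in>l2. (\<forall>k. \<psi> k = z * f k + T \<psi> k) \<and> l2norm \<psi> \<le> l2norm (\<lambda>k. z * f k) / (1 - \<theta>)"
      by (rule neumann_series_fixpoint[of "{-1, 0, 1}" T
            "\<lambda>k i. if i = 0 then 1 - z * (of_real (V k) - E) else - z"])
        (use contraction \<theta> zf in \<open>auto simp: T_def schr_def algebra_simps\<close>)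
    then obtain \<psi> where \<psi>: "\<psi> \<in> l2" "\<And>k. \<psi> k = z * f k + T \<psi> k"
      and bound: "l2norm \<psi> \<le> l2norm (\<lambda>k. z * f k) / (1 - \<theta>)" by blast
    have "z * (schr V \<psi> k - E * \<psi> k - f k) = 0" for k
      using \<psi>(2)[of k] by (simp add: T_def algebra_simps)
    then have "schr V \<psi> k - E * \<psi> k = f k" for k
      using z by simp
    moreover have "l2norm \<psi> \<le> cmod z / (1 - \<theta>) * l2norm f"
      using bound divide_right_mono[OF zf(2), of "1 - \<theta>"] \<theta> by simp
    ultimately show "\<exists>\<psi>\<in>l2. (\<forall>k. schr V \<psi> k - E * \<psi> k = f k) \<and> l2norm \<psi> \<le> cmod z / (1 - \<theta>) * l2norm f"
      using \<psi>(1) by blast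
  qed
qed

definition jacobi :: "int \<Rightarrow> (int \<Rightarrow> real) \<Rightarrow> (int \<Rightarrow> real) \<Rightarrow> (int \<Rightarrow> complex) \<Rightarrow> int \<Rightarrow> complex" where
  "jacobi s d b \<phi> k = of_real (d k) * \<phi> k - of_real (b k) * \<phi> (k + s) - of_real (b (k - s)) * \<phi> (k - s)"

definition jacobi_offdiag_scaled ::
    "int \<Rightarrow> (int \<Rightarrow> real) \<Rightarrow> (int \<Rightarrow> real) \<Rightarrow> (int \<Rightarrow> complex) \<Rightarrow> int \<Rightarrow> complex" where
  "jacobi_offdiag_scaled s d b X k = of_real (sqrt \<bar>d k\<bar> / d k) *
     (of_real (b k / sqrt \<bar>d (k + s)\<bar>) * X (k + s) + of_real (b (k - s) / sqrt \<bar>d (k - s)\<bar>) * X (k - s))"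

lemma jacobi_eq_offdiag_scaled:
  assumes "\<And>k. d k \<noteq> 0" and "\<And>j. X j = of_real (sqrt \<bar>d j\<bar>) * \<phi> j"
  shows "jacobi s d b \<phi> k = of_real (d k / sqrt \<bar>d k\<bar>) * (X k - jacobi_offdiag_scaled s d b X k)"
  using assms by (simp add: jacobi_def jacobi_offdiag_scaled_def field_simps)

lemma weighted_square_le:
  fixes \<alpha> \<beta> x y :: real
  assumes "0 \<le> \<alpha>" "0 \<le> \<beta>"
  shows "(\<alpha> * x + \<beta> * y)^2 \<le> (\<alpha> + \<beta>) * (\<alpha> * x^2 + \<beta> * y^2)"
proof -
  have "(\<alpha> + \<beta>) * (\<alpha> * x^2 + \<beta> * y^2) - (\<alpha> * x + \<beta> * y)^2 = \<alpha> * \<beta> * (x - y)^2"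
    by (simp add: algebra_simps power2_eq_square)
  moreover have "0 \<le> \<alpha> * \<beta> * (x - y)^2" using assms by simp
  ultimately show ?thesis by linarith
qed

lemma abs_sqrt_abs_div_self:
  fixes x :: real
  assumes "x \<noteq> 0"
  shows "\<bar>sqrt \<bar>x\<bar> / x\<bar> = 1 / sqrt \<bar>x\<bar>"
proof -
  have "\<bar>sqrt \<bar>x\<bar> / x\<bar> = sqrt \<bar>x\<bar> / \<bar>x\<bar>" by (simp add: abs_divide)
  also have "\<dots> = 1 / sqrt \<bar>x\<bar>"
    using assms real_sqrt_mult_self[of "\<bar>x\<bar>"] by (simp add: field_simps)
  finally show ?thesis .
qed

lemma jacobi_offdiag_scaled_pointwise:
  assumes d: "\<And>k. d k \<noteq> 0" and dom: "\<bar>b k\<bar> + \<bar>b (k - s)\<bar> \<le> \<theta> * \<bar>d k\<bar>"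
  shows "(cmod (jacobi_offdiag_scaled s d b X k))^2
    \<le> \<theta> * (\<bar>b k\<bar> * (cmod (X (k + s)))^2 / \<bar>d (k + s)\<bar> + \<bar>b (k - s)\<bar> * (cmod (X (k - s)))^2 / \<bar>d (k - s)\<bar>)"
proof -
  define x where "x = cmod (X (k + s)) / sqrt \<bar>d (k + s)\<bar>"
  define y where "y = cmod (X (k - s)) / sqrt \<bar>d (k - s)\<bar>"
  have scale: "cmod (of_real (sqrt \<bar>d k\<bar> / d k)) = 1 / sqrt \<bar>d k\<bar>"
    by (simp only: norm_of_real abs_sqrt_abs_div_self[OF d])
  have "cmod (jacobi_offdiag_scaled s d b X k)
      = 1 / sqrt \<bar>d k\<bar> * cmod (of_real (b k / sqrt \<bar>d (k + s)\<bar>) * X (k + s)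
        + of_real (b (k - s) / sqrt \<bar>d (k - s)\<bar>) * X (k - s))"
    unfolding jacobi_offdiag_scaled_def norm_mult scale ..
  also have "\<dots> \<le> 1 / sqrt \<bar>d k\<bar> * (cmod (of_real (b k / sqrt \<bar>d (k + s)\<bar>) * X (k + s))
        + cmod (of_real (b (k - s) / sqrt \<bar>d (k - s)\<bar>) * X (k - s)))"
    by (intro mult_left_mono norm_triangle_ineq) simp
  also have "\<dots> = 1 / sqrt \<bar>d k\<bar> * (\<bar>b k\<bar> * x + \<bar>b (k - s)\<bar> * y)"
    by (simp only: norm_mult norm_of_real abs_divide real_sqrt_abs2 x_def y_def) (simp add: abs_div_pos)
  finally have "(cmod (jacobi_offdiag_scaled s d b X k))^2 \<le> (1 / sqrt \<bar>d k\<bar> * (\<bar>b k\<bar> * x + \<bar>b (k - s)\<bar> * y))^2"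
    by (rule power_mono) simp
  also have "\<dots> \<le> (\<bar>b k\<bar> + \<bar>b (k - s)\<bar>) / \<bar>d k\<bar> * (\<bar>b k\<bar> * x^2 + \<bar>b (k - s)\<bar> * y^2)"
    using weighted_square_le[of "\<bar>b k\<bar>" "\<bar>b (k - s)\<bar>" x y]
    by (simp add: power_mult_distrib power_divide divide_right_mono)
  also have "\<dots> \<le> \<theta> * (\<bar>b k\<bar> * x^2 + \<bar>b (k - s)\<bar> * y^2)"
    using dom d[of k] by (intro mult_right_mono) (auto simp: divide_le_eq mult.commute)
  finally show ?thesis by (simp add: x_def y_def power_divide)
qed

lemma dominance_imp_nonneg:
  fixes b d :: "int \<Rightarrow> real"
  assumes "\<And>k. \<bar>b k\<bar> + \<bar>b (k - s)\<bar> \<le> \<theta> * \<bar>d k\<bar>" "d 0 \<noteq> 0"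
  shows "0 \<le> \<theta>"
proof -
  have "0 \<le> \<theta> * \<bar>d 0\<bar>" using assms(1)[of 0] abs_ge_zero[of "b 0"] abs_ge_zero[of "b (0 - s)"] by linarith
  then show ?thesis using assms(2) by (simp add: zero_le_mult_iff)
qed

(* Schur's test with weights |d|: summing the pointwise bound, each site j collects
   |b j| + |b (j - s)| <= theta |d j|. *)
lemma jacobi_offdiag_scaled_contraction:
  assumes d: "\<And>k. d k \<noteq> 0" and dom: "\<And>k. \<bar>b k\<bar> + \<bar>b (k - s)\<bar> \<le> \<theta> * \<bar>d k\<bar>"
    and X: "X \<in> l2"
  shows "jacobi_offdiag_scaled s d b X \<in> l2" "l2norm (jacobi_offdiag_scaled s d b X) \<le> \<theta> * l2norm X"
proof -
  define h where "h j = (\<bar>b j\<bar> + \<bar>b (j - s)\<bar>) * (cmod (X j))^2 / \<bar>d j\<bar>" for j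
  have \<theta>: "0 \<le> \<theta>" by (rule dominance_imp_nonneg[where s = s and d = d and b = b, OF dom d])
  have h: "h j \<le> \<theta> * (cmod (X j))^2" for j
  proof -
    have "(\<bar>b j\<bar> + \<bar>b (j - s)\<bar>) / \<bar>d j\<bar> \<le> \<theta>" using dom[of j] d[of j] by (simp add: divide_le_eq)
    moreover have "h j = (\<bar>b j\<bar> + \<bar>b (j - s)\<bar>) / \<bar>d j\<bar> * (cmod (X j))^2" by (simp add: h_def)
    ultimately show ?thesis by (metis mult_right_mono zero_le_power2)
  qed
  have sums: "(\<Sum>k\<in>S. (cmod (jacobi_offdiag_scaled s d b X k))^2) \<le> \<theta>^2 * l2sq X" if S: "finite S" for S
  proof -
    define U where "U = (\<lambda>k. k + s) ` S \<union> (\<lambda>k. k - s) ` S"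
    define h1 where "h1 j = \<bar>b (j - s)\<bar> * (cmod (X j))^2 / \<bar>d j\<bar>" for j
    define h2 where "h2 j = \<bar>b j\<bar> * (cmod (X j))^2 / \<bar>d j\<bar>" for j
    have "(cmod (jacobi_offdiag_scaled s d b X k))^2 \<le> \<theta> * (h1 (k + s) + h2 (k - s))" for k
      using jacobi_offdiag_scaled_pointwise[where d = d and b = b and s = s and \<theta> = \<theta> and X = X, OF d dom[of k]] by (simp add: h1_def h2_def)
    then have "(\<Sum>k\<in>S. (cmod (jacobi_offdiag_scaled s d b X k))^2) \<le> \<theta> * (\<Sum>k\<in>S. h1 (k + s) + h2 (k - s))"
      by (simp add: sum_distrib_left sum_mono)
    also have "(\<Sum>k\<in>S. h1 (k + s) + h2 (k - s)) = (\<Sum>j\<in>(\<lambda>k. k + s) ` S. h1 j) + (\<Sum>j\<in>(\<lambda>k. k - s) ` S. h2 j)"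
      by (simp add: sum.distrib sum.reindex inj_on_def)
    also have "\<dots> \<le> (\<Sum>j\<in>U. h1 j) + (\<Sum>j\<in>U. h2 j)"
      using S by (intro add_mono sum_mono2) (auto simp: U_def h1_def h2_def)
    also have "\<dots> = (\<Sum>j\<in>U. h j)" by (simp add: h_def h1_def h2_def sum.distrib[symmetric] add_divide_distrib distrib_right add.commute)
    also have "\<dots> \<le> \<theta> * (\<Sum>j\<in>U. (cmod (X j))^2)" by (simp add: sum_distrib_left sum_mono h)
    also have "\<dots> \<le> \<theta> * l2sq X" using S X \<theta> by (intro mult_left_mono sum_le_l2sq) (auto simp: U_def)
    finally show ?thesis using \<theta> by (simp add: mult_left_mono power2_eq_square mult.assoc)
  qed
  show "jacobi_offdiag_scaled s d b X \<in> l2" by (rule l2_if_bounded_sums(1)) (rule sums)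
  show "l2norm (jacobi_offdiag_scaled s d b X) \<le> \<theta> * l2norm X"
    using l2_if_bounded_sums(2)[OF sums] \<theta>
    by (simp add: l2norm_le_iff_l2sq_le l2norm_nonneg l2sq_eq_l2norm_sq power_mult_distrib)
qed

lemma jacobi_injective:
  assumes d: "\<And>k. d k \<noteq> 0" "\<And>k. \<bar>d k\<bar> \<le> dM"
    and dom: "\<And>k. \<bar>b k\<bar> + \<bar>b (k - s)\<bar> \<le> \<theta> * \<bar>d k\<bar>" and \<theta>: "\<theta> < 1"
    and \<phi>: "\<phi> \<in> l2" and zero: "\<And>k. jacobi s d b \<phi> k = 0"
  shows "\<phi> = (\<lambda>k. 0)"
proof -
  define X where "X j = of_real (sqrt \<bar>d j\<bar>) * \<phi> j" for j
  have "cmod (of_real (sqrt \<bar>d j\<bar>)) \<le> sqrt dM" for j using d(2)[of j] by simp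
  from l2_mult(1)[where m = "\<lambda>j. of_real (sqrt \<bar>d j\<bar>)", OF this \<phi>] have X: "X \<in> l2" unfolding X_def .
  have "X k = jacobi_offdiag_scaled s d b X k" for k
    using jacobi_eq_offdiag_scaled[OF d(1) X_def, where s = s and b = b and k = k] zero[of k] d(1)[of k] by simp
  then have "jacobi_offdiag_scaled s d b X = X" by auto
  then have "X = (\<lambda>k. 0)"
    using jacobi_offdiag_scaled_contraction(2)[where s = s and d = d and b = b and \<theta> = \<theta>, OF d(1) dom X] \<theta>
    by (intro l2_eq_0_if_contraction[OF X]) auto
  then show ?thesis using d(1) by (auto simp: X_def fun_eq_iff)
qed

lemma jacobi_surjective:
  assumes s: "s \<noteq> 0" and d: "0 < dm" "\<And>k. dm \<le> \<bar>d k\<bar>"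
    and dom: "\<And>k. \<bar>b k\<bar> + \<bar>b (k - s)\<bar> \<le> \<theta> * \<bar>d k\<bar>" and \<theta>: "\<theta> < 1" and f: "f \<in> l2"
  shows "\<exists>\<phi>\<in>l2. (\<forall>k. jacobi s d b \<phi> k = f k) \<and> l2norm \<phi> \<le> l2norm f / (dm * (1 - \<theta>))"
proof -
  define w where "w j = sqrt \<bar>d j\<bar>" for j
  define L where "L = jacobi_offdiag_scaled s d b"
  have d0: "d k \<noteq> 0" for k using d(1) d(2)[of k] by auto
  have w: "sqrt dm \<le> w k" "0 < w k" for k using d(1) d(2)[of k] by (auto simp: w_def)
  have \<theta>0: "0 \<le> \<theta>" by (rule dominance_imp_nonneg[where s = s and d = d and b = b and \<theta> = \<theta>, OF dom d0])
  define g where "g k = of_real (w k / d k) * f k" for k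
  have "cmod (of_real (w k / d k)) \<le> 1 / sqrt dm" for k
    unfolding norm_of_real w_def abs_sqrt_abs_div_self[OF d0]
    by (intro frac_le) (use d(1) d(2)[of k] in auto)
  from l2_mult[where m = "\<lambda>k. of_real (w k / d k)", OF this f] have g: "g \<in> l2" "l2norm g \<le> 1 / sqrt dm * l2norm f"
    unfolding g_def by blast+
  have "\<exists>X\<in>l2. (\<forall>k. X k = g k + L X k) \<and> l2norm X \<le> l2norm g / (1 - \<theta>)"
    by (rule neumann_series_fixpoint[of "{s, -s}" L
          "\<lambda>k i. of_real (w k / d k) * of_real (if i = s then b k / w (k + s) else b (k - s) / w (k - s))"])
      (use s \<theta>0 \<theta> g jacobi_offdiag_scaled_contraction[where s = s and d = d and b = b and \<theta> = \<theta>, OF d0 dom] in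
        \<open>auto simp: L_def jacobi_offdiag_scaled_def w_def algebra_simps\<close>)
  then obtain X where X: "X \<in> l2" "\<And>k. X k = g k + L X k" "l2norm X \<le> l2norm g / (1 - \<theta>)"
    by blast
  define \<phi> where "\<phi> k = of_real (1 / w k) * X k" for k
  have "cmod (of_real (1 / w k)) \<le> 1 / sqrt dm" for k
    using frac_le[of 1 1 "sqrt dm" "w k"] w[of k] d(1) by (simp add: norm_divide)
  from l2_mult[where m = "\<lambda>k. of_real (1 / w k)", OF this X(1)] have \<phi>: "\<phi> \<in> l2" "l2norm \<phi> \<le> 1 / sqrt dm * l2norm X"
    unfolding \<phi>_def by blast+
  have "jacobi s d b \<phi> k = f k" for k
  proof -
    have "X j = of_real (sqrt \<bar>d j\<bar>) * \<phi> j" for j using w(2)[of j] by (simp add: \<phi>_def w_def)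
    from jacobi_eq_offdiag_scaled[OF d0 this, where s = s and b = b and k = k] X(2)[of k] w(2)[of k] d0[of k]
    show ?thesis by (simp add: L_def g_def w_def)
  qed
  moreover have "l2norm \<phi> \<le> l2norm f / (dm * (1 - \<theta>))"
  proof -
    have "l2norm \<phi> \<le> 1 / sqrt dm * l2norm X" by (rule \<phi>(2))
    also have "\<dots> \<le> 1 / sqrt dm * (l2norm g / (1 - \<theta>))"
      using X(3) d(1) by (intro mult_left_mono) auto
    also have "\<dots> \<le> 1 / sqrt dm * (1 / sqrt dm * l2norm f / (1 - \<theta>))"
      using g(2) \<theta> d(1) by (intro mult_left_mono divide_right_mono) auto
    also have "\<dots> = l2norm f / (dm * (1 - \<theta>))" using d(1) by (simp add: field_simps)
    finally show ?thesis .
  qed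
  ultimately show ?thesis using \<phi>(1) by blast
qed

definition schur_diag :: "(int \<Rightarrow> real) \<Rightarrow> real \<Rightarrow> int \<Rightarrow> real" where
  "schur_diag V e k = (e - V k) - 1 / (e - V (k + 1)) - 1 / (e - V (k - 1))"

definition schur_offdiag :: "(int \<Rightarrow> real) \<Rightarrow> real \<Rightarrow> int \<Rightarrow> real" where
  "schur_offdiag V e k = 1 / (e - V (k + 1))"

lemma jacobi_schur_diag_offdiag:
  fixes V :: "int \<Rightarrow> real" and e :: real
  defines "c \<equiv> (\<lambda>k. complex_of_real (e - V k))"
  shows "jacobi 2 (schur_diag V e) (schur_offdiag V e) \<phi> k
    = (c k - 1 / c (k + 1) - 1 / c (k - 1)) * \<phi> k - \<phi> (k + 2) / c (k + 1) - \<phi> (k - 2) / c (k - 1)"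
  by (simp add: jacobi_def schur_diag_def schur_offdiag_def c_def)

(* Eliminating the neighbours k + 1 and k - 1 from (e - H) psi = r leaves the stride-two
   Jacobi operator with entries schur_diag and schur_offdiag. *)
lemma jacobi_schur_eq:
  fixes \<psi> :: "int \<Rightarrow> complex"
  assumes "\<And>k. e - V k \<noteq> 0"
  defines "r \<equiv> (\<lambda>k. of_real e * \<psi> k - schr V \<psi> k)"
  shows "jacobi 2 (schur_diag V e) (schur_offdiag V e) \<psi> k
    = r k + r (k + 1) / of_real (e - V (k + 1)) + r (k - 1) / of_real (e - V (k - 1))"
proof -
  define c where "c j = complex_of_real (e - V j)" for j
  have c: "c j \<noteq> 0" for j using assms by (simp add: c_def)
  have r: "r j = c j * \<psi> j - \<psi> (j + 1) - \<psi> (j - 1)" for j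
    by (simp add: r_def c_def schr_def algebra_simps)
  have "k + 1 + 1 = k + 2" "k + 1 - 1 = k" "k - 1 + 1 = k" "k - 1 - 1 = k - 2" by auto
  with c[of "k + 1"] c[of "k - 1"] show ?thesis
    unfolding jacobi_schur_diag_offdiag c_def[symmetric] r by (simp add: field_simps)
qed

lemma schr_lift_schur:
  fixes \<phi> :: "int \<Rightarrow> complex"
  assumes "\<And>k. e - V k \<noteq> 0"
  defines "\<psi> \<equiv> (\<lambda>j. \<phi> j + (\<phi> (j + 1) + \<phi> (j - 1)) / of_real (e - V j))"
  shows "of_real e * \<psi> k - schr V \<psi> k = jacobi 2 (schur_diag V e) (schur_offdiag V e) \<phi> k"
proof -
  define c where "c j = complex_of_real (e - V j)" for j
  have c: "c j \<noteq> 0" for j using assms by (simp add: c_def)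
  have lhs: "of_real e * \<psi> k - schr V \<psi> k = c k * \<psi> k - \<psi> (k + 1) - \<psi> (k - 1)"
    by (simp add: c_def schr_def algebra_simps)
  have \<psi>: "\<psi> j = \<phi> j + (\<phi> (j + 1) + \<phi> (j - 1)) / c j" for j by (simp add: \<psi>_def c_def)
  have "k + 1 + 1 = k + 2" "k + 1 - 1 = k" "k - 1 + 1 = k" "k - 1 - 1 = k - 2" by auto
  with c[of k] c[of "k + 1"] c[of "k - 1"] show ?thesis
    unfolding lhs unfolding \<psi> jacobi_schur_diag_offdiag c_def[symmetric] by (simp add: field_simps)
qed

lemma l2_schur_lift:
  fixes \<phi> :: "int \<Rightarrow> complex"
  assumes c: "0 < cm" "\<And>k. cm \<le> \<bar>e - V k\<bar>" and \<phi>: "\<phi> \<in> l2"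
  defines "\<psi> \<equiv> (\<lambda>j. \<phi> j + (\<phi> (j + 1) + \<phi> (j - 1)) / of_real (e - V j))"
  shows "\<psi> \<in> l2" "l2norm \<psi> \<le> (1 + 1 / cm) * 3 * l2norm \<phi>"
proof -
  define M where "M = 1 + 1 / cm"
  have M: "0 \<le> M" using c(1) by (simp add: M_def)
  have "cmod (\<psi> k) \<le> (\<Sum>i\<in>{-1, 0, 1}. M * cmod (\<phi> (k + i)))" for k
  proof -
    have "cmod (of_real e - of_real (V k)) = \<bar>e - V k\<bar>" by (metis norm_of_real of_real_diff)
    then have "cmod (\<psi> k) \<le> cmod (\<phi> k) + (cmod (\<phi> (k + 1)) + cmod (\<phi> (k - 1))) / \<bar>e - V k\<bar>"
      unfolding \<psi>_def using norm_triangle_ineq[of "\<phi> (k + 1)" "\<phi> (k - 1)"]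
      by (intro order_trans[OF norm_triangle_ineq] add_left_mono)
        (auto simp: norm_divide intro!: divide_right_mono)
    also have "\<dots> \<le> cmod (\<phi> k) + (cmod (\<phi> (k + 1)) + cmod (\<phi> (k - 1))) / cm"
      using c(1) c(2)[of k] by (intro add_left_mono divide_left_mono) (auto intro: mult_pos_pos)
    also have "\<dots> \<le> M * cmod (\<phi> (k - 1)) + M * cmod (\<phi> k) + M * cmod (\<phi> (k + 1))"
      using c(1) by (simp add: M_def algebra_simps add_divide_distrib)
    finally show ?thesis by simp
  qed
  from l2_if_dominated_by_translates[where \<psi> = \<psi> and F = "{-1, 0, 1}", OF _ \<phi> M this]
  show "\<psi> \<in> l2" "l2norm \<psi> \<le> (1 + 1 / cm) * 3 * l2norm \<phi>" by (simp_all add: M_def)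
qed

lemma real_not_in_spectrum_schr:
  assumes V: "\<And>k. \<bar>V k\<bar> \<le> B" and c: "0 < cm" "\<And>k. cm \<le> \<bar>e - V k\<bar>"
    and d: "0 < dm" "\<And>k. dm \<le> \<bar>schur_diag V e k\<bar>" "\<And>k. \<bar>schur_diag V e k\<bar> \<le> dM"
    and dom: "\<And>k. \<bar>schur_offdiag V e k\<bar> + \<bar>schur_offdiag V e (k - 2)\<bar> \<le> \<theta> * \<bar>schur_diag V e k\<bar>"
    and \<theta>: "\<theta> < 1"
  shows "complex_of_real e \<notin> spectrum_op (schr V)"
proof (rule not_in_spectrum_schrI[OF V])
  have c0: "e - V k \<noteq> 0" for k using c[of] by (metis abs_zero not_le)
  have d0: "schur_diag V e k \<noteq> 0" for k using d(1) d(2)[of k] by auto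
  fix \<psi> assume \<psi>: "\<psi> \<in> l2" and "\<And>k. schr V \<psi> k = complex_of_real e * \<psi> k"
  then have "jacobi 2 (schur_diag V e) (schur_offdiag V e) \<psi> k = 0" for k
    by (simp add: jacobi_schur_eq[where V = V and e = e, OF c0])
  then show "\<psi> = (\<lambda>k. 0)"
    by (rule jacobi_injective[where s = 2 and d = "schur_diag V e" and b = "schur_offdiag V e",
          OF d0 d(3) dom \<theta> \<psi>])
next
  have c0: "e - V k \<noteq> 0" for k using c[of] by (metis abs_zero not_le)
  fix f assume f: "f \<in> l2"
  have neg_f: "(\<lambda>k. - f k) \<in> l2" "l2norm (\<lambda>k. - f k) \<le> 1 * l2norm f"
    using l2_mult[where m = "\<lambda>_. -1" and K = 1, OF _ f] by auto
  obtain \<phi> where \<phi>: "\<phi> \<in> l2" "\<And>k. jacobi 2 (schur_diag V e) (schur_offdiag V e) \<phi> k = - f k"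
    and "l2norm \<phi> \<le> l2norm (\<lambda>k. - f k) / (dm * (1 - \<theta>))"
    using jacobi_surjective[where s = 2 and d = "schur_diag V e" and b = "schur_offdiag V e",
        OF _ d(1,2) dom \<theta> neg_f(1)] by auto
  moreover have "l2norm (\<lambda>k. - f k) / (dm * (1 - \<theta>)) \<le> l2norm f / (dm * (1 - \<theta>))"
    using neg_f(2) \<theta> d(1) by (intro divide_right_mono) auto
  ultimately have \<phi>_bound: "l2norm \<phi> \<le> l2norm f / (dm * (1 - \<theta>))" by linarith
  define \<psi> where "\<psi> = (\<lambda>j. \<phi> j + (\<phi> (j + 1) + \<phi> (j - 1)) / of_real (e - V j))"
  have "of_real e * \<psi> k - schr V \<psi> k = - f k" for k
    using schr_lift_schur[where V = V and e = e and \<phi> = \<phi> and k = k, OF c0] \<phi>(2)[of k] by (simp add: \<psi>_def)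
  then have "schr V \<psi> k - of_real e * \<psi> k = f k" for k by (metis minus_diff_eq minus_minus)
  moreover note lift = l2_schur_lift[where e = e and V = V, OF c \<phi>(1), folded \<psi>_def]
  moreover have "(1 + 1 / cm) * 3 * l2norm \<phi> \<le> (1 + 1 / cm) * 3 / (dm * (1 - \<theta>)) * l2norm f"
    using mult_left_mono[OF \<phi>_bound, of "(1 + 1 / cm) * 3"] c(1) by simp
  ultimately show "\<exists>\<psi>\<in>l2. (\<forall>k. schr V \<psi> k - of_real e * \<psi> k = f k)
      \<and> l2norm \<psi> \<le> (1 + 1 / cm) * 3 / (dm * (1 - \<theta>)) * l2norm f"
    by force
qed

lemma finite_range_imp_uniform_pos:
  fixes F :: "'a \<Rightarrow> real"
  assumes "finite (range F)" "\<And>x. 0 < F x"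
  shows "\<exists>m>0. \<forall>x. m \<le> F x"
  using assms by (intro exI[of _ "Min (range F)"]) (auto simp: Min_gr_iff)

lemma finite_range_imp_bounded:
  fixes F :: "'a \<Rightarrow> real"
  assumes "finite (range F)"
  shows "\<exists>M. \<forall>x. F x \<le> M"
  using assms by (intro exI[of _ "Max (range F)"]) auto

lemma finite_range_neighbourhood:
  assumes "finite (range V)"
  shows "finite (range (\<lambda>k::int. G (V (k - 1)) (V k) (V (k + 1))))"
proof (rule finite_subset)
  show "range (\<lambda>k. G (V (k - 1)) (V k) (V (k + 1))) \<subseteq> (\<lambda>(a, b, c). G a b c) ` (range V \<times> range V \<times> range V)"
  proof (rule image_subsetI)
    fix k :: int
    show "G (V (k - 1)) (V k) (V (k + 1)) \<in> (\<lambda>(a, b, c). G a b c) ` (range V \<times> range V \<times> range V)"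
      by (rule image_eqI[where x = "(V (k - 1), V k, V (k + 1))"]) auto
  qed
qed (use assms in simp)

(* With q = e - V k and x, y = e - V (k + 1), e - V (k - 1): if e lies outside the bands of both
   neighbouring pairs of values, the Schur complement is strictly diagonally dominant at k. *)
lemma two_step_dominance:
  fixes q x y :: real
  assumes "q * x < 0 \<or> 4 < q * x" "q * y < 0 \<or> 4 < q * y"
  shows "\<bar>1 / x\<bar> + \<bar>1 / y\<bar> < \<bar>q - 1 / x - 1 / y\<bar>"
proof -
  have pos: "\<bar>1 / x\<bar> + \<bar>1 / y\<bar> < \<bar>q - 1 / x - 1 / y\<bar>"
    if q: "0 < q" and "q * x < 0 \<or> 4 < q * x" "q * y < 0 \<or> 4 < q * y" for q x y :: real
  proof -
    have inv: "1 / z < 0 \<or> (0 < 1 / z \<and> 4 * (1 / z) < q)" if "q * z < 0 \<or> 4 < q * z" for z :: real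
    proof (cases "z < 0")
      case False
      with that q have "4 < q * z" by (auto simp: mult_less_0_iff)
      moreover from this q have "0 < z" using zero_less_mult_pos[of q z] by linarith
      ultimately show ?thesis by (simp add: divide_less_eq mult.commute)
    qed simp
    show ?thesis using inv[OF that(2)] inv[OF that(3)] q by (auto simp: abs_if)
  qed
  show ?thesis
  proof (cases "0 < q")
    case False
    then have "0 < - q" using assms by (cases "q = 0") auto
    from pos[OF this, of "- x" "- y"] assms show ?thesis by (simp add: abs_minus_commute)
  qed (use pos assms in blast)
qed

lemma real_not_in_spectrum_schr_finite_range:
  assumes fin: "finite (range V)"
    and gap: "\<And>k. (e - V k) * (e - V (k + 1)) < 0 \<or> 4 < (e - V k) * (e - V (k + 1))"
  shows "complex_of_real e \<notin> spectrum_op (schr V)"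
proof -
  define \<rho> where "\<rho> k = (\<bar>schur_offdiag V e k\<bar> + \<bar>schur_offdiag V e (k - 2)\<bar>) / \<bar>schur_diag V e k\<bar>" for k
  have c0: "e - V k \<noteq> 0" for k using gap[of k] by auto
  have dom: "\<bar>schur_offdiag V e k\<bar> + \<bar>schur_offdiag V e (k - 2)\<bar> < \<bar>schur_diag V e k\<bar>" for k
    using two_step_dominance[of "e - V k" "e - V (k + 1)" "e - V (k - 1)"] gap[of k] gap[of "k - 1"]
    by (simp add: schur_diag_def schur_offdiag_def mult.commute)
  have d0: "0 < \<bar>schur_diag V e k\<bar>" for k
    using dom[of k] abs_ge_zero[of "schur_offdiag V e k"] abs_ge_zero[of "schur_offdiag V e (k - 2)"]
    by linarith
  have "finite (range (\<lambda>k. \<bar>V k\<bar>))" using fin by (metis image_image finite_imageI)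
  then obtain B where B: "\<And>k. \<bar>V k\<bar> \<le> B" using finite_range_imp_bounded by blast
  have "finite (range (\<lambda>k. \<bar>e - V k\<bar>))" using fin by (metis image_image finite_imageI)
  then obtain cm where cm: "0 < cm" "\<And>k. cm \<le> \<bar>e - V k\<bar>"
    using finite_range_imp_uniform_pos[of "\<lambda>k. \<bar>e - V k\<bar>"] c0 by auto
  have "finite (range (\<lambda>k. \<bar>schur_diag V e k\<bar>))"
    using finite_range_neighbourhood[OF fin, of "\<lambda>a b c. \<bar>(e - b) - 1 / (e - c) - 1 / (e - a)\<bar>"]
    by (simp add: schur_diag_def)
  then obtain dm dM where dm: "0 < dm" "\<And>k. dm \<le> \<bar>schur_diag V e k\<bar>" and dM: "\<And>k. \<bar>schur_diag V e k\<bar> \<le> dM"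
    using finite_range_imp_uniform_pos[of "\<lambda>k. \<bar>schur_diag V e k\<bar>"] finite_range_imp_bounded d0 by metis
  have "finite (range (\<lambda>k. 1 - \<rho> k))"
    using finite_range_neighbourhood[OF fin,
        of "\<lambda>a b c. 1 - (\<bar>1 / (e - c)\<bar> + \<bar>1 / (e - a)\<bar>) / \<bar>(e - b) - 1 / (e - c) - 1 / (e - a)\<bar>"]
    by (simp add: \<rho>_def schur_diag_def schur_offdiag_def)
  moreover have "0 < 1 - \<rho> k" for k using dom[of k] d0[of k] by (simp add: \<rho>_def divide_less_eq)
  ultimately obtain m where m: "0 < m" "\<And>k. m \<le> 1 - \<rho> k"
    using finite_range_imp_uniform_pos[of "\<lambda>k. 1 - \<rho> k"] by auto
  have "\<bar>schur_offdiag V e k\<bar> + \<bar>schur_offdiag V e (k - 2)\<bar> \<le> (1 - m) * \<bar>schur_diag V e k\<bar>" for k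
  proof -
    have "\<rho> k * \<bar>schur_diag V e k\<bar> \<le> (1 - m) * \<bar>schur_diag V e k\<bar>"
      using m(2)[of k] by (intro mult_right_mono) auto
    then show ?thesis using d0[of k] by (simp add: \<rho>_def)
  qed
  from real_not_in_spectrum_schr[OF B cm dm dM this] m(1) show ?thesis by simp
qed

definition band :: "real \<Rightarrow> real \<Rightarrow> complex set" where
  "band u v = {E. \<exists>r. 0 \<le> r \<and> r \<le> 4 \<and> (E - of_real u) * (E - of_real v) = of_real r}"

(* The quasi-momentum theta is chosen with 2 + 2 cos theta = (E - u) (E - v). *)
lemma bloch_coefficients:
  assumes "E \<in> band u v"
  shows "\<exists>\<alpha> \<beta> \<theta>. (\<alpha> \<noteq> 0 \<or> \<beta> \<noteq> 0) \<and> \<beta> * (1 + cis (- \<theta>)) = (E - of_real u) * \<alpha>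
    \<and> \<alpha> * (1 + cis \<theta>) = (E - of_real v) * \<beta>"
proof -
  obtain c where c: "0 \<le> c" "c \<le> 4" and pq: "(E - of_real u) * (E - of_real v) = of_real c"
    using assms by (auto simp: band_def)
  define \<theta> where "\<theta> = arccos (c / 2 - 1)"
  have "cos \<theta> = c / 2 - 1" unfolding \<theta>_def using c by (intro cos_arccos) auto
  then have "complex_of_real c = 2 + 2 * of_real (cos \<theta>)" by simp
  moreover have "cis \<theta> + cis (- \<theta>) = of_real (2 * cos \<theta>)"
    by (simp add: complex_eq_iff)
  ultimately have prod: "(1 + cis (- \<theta>)) * (1 + cis \<theta>) = of_real c"
    by (simp add: algebra_simps cis_mult)
  show ?thesis
  proof (cases "E - of_real u = 0 \<and> cis \<theta> = -1")
    case True
    then show ?thesis by (intro exI[of _ 1] exI[of _ 0] exI[of _ \<theta>]) simp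
  next
    case False
    have "1 + cis (- \<theta>) \<noteq> 0 \<or> E - of_real u \<noteq> 0"
    proof (rule ccontr)
      assume "\<not> ?thesis"
      then have "cnj (cis (- \<theta>)) = -1" "E - of_real u = 0" by (auto simp: add_eq_0_iff)
      with False show False by (simp add: cis_cnj)
    qed
    with prod pq show ?thesis
      by (intro exI[of _ "1 + cis (- \<theta>)"] exI[of _ "E - of_real u"] exI[of _ \<theta>]) (auto simp: mult.commute)
  qed
qed

lemma bloch_solution:
  assumes "E \<in> band u v"
  shows "\<exists>\<phi> \<alpha> \<beta>. (\<alpha> \<noteq> 0 \<or> \<beta> \<noteq> 0) \<and> (\<forall>j. cmod (\<phi> (2 * j)) = cmod \<alpha> \<and> cmod (\<phi> (2 * j + 1)) = cmod \<beta>)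
    \<and> (\<forall>k. schr (xab u v) \<phi> k = E * \<phi> k)"
proof -
  obtain \<alpha> \<beta> \<theta> where ab: "\<alpha> \<noteq> 0 \<or> \<beta> \<noteq> 0"
    and e1: "\<beta> * (1 + cis (- \<theta>)) = (E - of_real u) * \<alpha>"
    and e2: "\<alpha> * (1 + cis \<theta>) = (E - of_real v) * \<beta>"
    using bloch_coefficients[OF assms] by blast
  define \<phi> where "\<phi> k = (if even k then \<alpha> else \<beta>) * cis (\<theta> * of_int (k div 2))" for k :: int
  have even: "\<phi> (2 * j) = \<alpha> * cis (\<theta> * of_int j)" for j by (simp add: \<phi>_def)
  have odd: "\<phi> (2 * j + 1) = \<beta> * cis (\<theta> * of_int j)" for j by (simp add: \<phi>_def)
  have "schr (xab u v) \<phi> k = E * \<phi> k" for k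
  proof (cases "even k")
    case True
    then obtain j where k: "k = 2 * j" by (auto elim: evenE)
    have prev: "\<phi> (2 * j - 1) = \<beta> * cis (\<theta> * of_int j) * cis (- \<theta>)"
      using odd[of "j - 1"] by (simp add: cis_mult algebra_simps)
    have "schr (xab u v) \<phi> (2 * j) = \<phi> (2 * j + 1) + \<phi> (2 * j - 1) + of_real u * \<phi> (2 * j)"
      by (simp add: schr_def xab_def)
    also have "\<dots> = cis (\<theta> * of_int j) * (\<beta> * (1 + cis (- \<theta>)) + of_real u * \<alpha>)"
      unfolding odd even prev by (simp add: algebra_simps)
    also have "\<dots> = E * \<phi> (2 * j)" unfolding e1 even by (simp add: algebra_simps)
    finally show ?thesis unfolding k .
  next
    case False
    then obtain j where k: "k = 2 * j + 1" by (auto elim: oddE)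
    have succ: "\<phi> (2 * j + 1 + 1) = \<alpha> * cis (\<theta> * of_int j) * cis \<theta>"
      using even[of "j + 1"] by (simp add: cis_mult algebra_simps)
    have "schr (xab u v) \<phi> (2 * j + 1) = \<phi> (2 * j + 1 + 1) + \<phi> (2 * j) + of_real v * \<phi> (2 * j + 1)"
      by (simp add: schr_def xab_def)
    also have "\<dots> = cis (\<theta> * of_int j) * (\<alpha> * (1 + cis \<theta>) + of_real v * \<beta>)"
      unfolding odd even succ by (simp add: algebra_simps)
    also have "\<dots> = E * \<phi> (2 * j + 1)" unfolding e2 odd by (simp add: algebra_simps)
    finally show ?thesis unfolding k .
  qed
  with ab show ?thesis by (intro exI[of _ \<phi>] exI[of _ \<alpha>] exI[of _ \<beta>]) (simp add: even odd norm_mult)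
qed

lemma schr_minus_truncation:
  assumes eig: "\<And>k. schr W \<phi> k = E * \<phi> k" and k: "k \<notin> {lo - 1, lo, hi, hi + 1}"
  defines "\<psi> \<equiv> (\<lambda>j. if lo \<le> j \<and> j \<le> hi then \<phi> j else 0)"
  shows "schr W \<psi> k - E * \<psi> k = 0"
proof (cases "lo < k \<and> k < hi")
  case True
  then show ?thesis using eig[of k] by (simp add: schr_def \<psi>_def)
next
  case False
  with k show ?thesis by (auto simp: schr_def \<psi>_def)
qed

lemma l2sq_le_card_support:
  fixes M :: real
  assumes "finite S" "\<And>k. k \<notin> S \<Longrightarrow> f k = 0" "\<And>k. cmod (f k) \<le> M"
  shows "f \<in> l2" "l2sq f \<le> card S * M^2"
proof -
  show "f \<in> l2" by (rule l2_finite_support(1)[OF assms(1,2)])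
  have "(\<Sum>k\<in>S. (cmod (f k))^2) \<le> (\<Sum>k\<in>S. M^2)"
    using assms(3) by (intro sum_mono power_mono) auto
  then show "l2sq f \<le> card S * M^2" by (simp add: l2_finite_support(2)[OF assms(1,2)])
qed

lemma sum_int_interval_pairs:
  fixes f :: "int \<Rightarrow> 'a::comm_monoid_add"
  shows "(\<Sum>k = 2 * a..2 * a + 2 * int L + 1. f k) = (\<Sum>j = a..a + int L. f (2 * j) + f (2 * j + 1))"
proof (induction L)
  case 0
  have "{2 * a..2 * a + 1} = {2 * a, 2 * a + 1}" by auto
  then show ?case by simp
next
  case (Suc L)
  have "{2 * a..2 * a + 2 * int (Suc L) + 1}
      = insert (2 * a + 2 * int L + 3) (insert (2 * a + 2 * int L + 2) {2 * a..2 * a + 2 * int L + 1})"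
    by auto
  moreover have "{a..a + int (Suc L)} = insert (a + int L + 1) {a..a + int L}" by auto
  ultimately show ?case
    using Suc.IH by (simp add: algebra_simps)
qed

lemma norm_schr_minus_le:
  assumes \<psi>: "\<And>j. cmod (\<psi> j) \<le> G" and V: "\<bar>V k\<bar> \<le> B"
  shows "cmod (schr V \<psi> k - E * \<psi> k) \<le> (2 + B + cmod E) * G"
proof -
  have "cmod (of_real (V k) - E) \<le> B + cmod E"
    using norm_triangle_ineq4[of "of_real (V k)" E] V by simp
  then have V\<psi>: "cmod ((of_real (V k) - E) * \<psi> k) \<le> (B + cmod E) * G"
    unfolding norm_mult using \<psi>[of k] V by (intro mult_mono) auto
  have "schr V \<psi> k - E * \<psi> k = (\<psi> (k + 1) + \<psi> (k - 1)) + (of_real (V k) - E) * \<psi> k"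
    by (simp add: schr_def algebra_simps)
  then have "cmod (schr V \<psi> k - E * \<psi> k) \<le> cmod (\<psi> (k + 1) + \<psi> (k - 1)) + cmod ((of_real (V k) - E) * \<psi> k)"
    by (simp only: norm_triangle_ineq)
  also have "\<dots> \<le> (G + G) + (B + cmod E) * G"
    by (intro add_mono order_trans[OF norm_triangle_ineq] \<psi> V\<psi>)
  finally show ?thesis by (simp add: algebra_simps)
qed

lemma l2norm_schr_minus_truncation_le:
  fixes lo hi :: int
  assumes eig: "\<And>k. schr W \<phi> k = E * \<phi> k" and \<phi>: "\<And>k. cmod (\<phi> k) \<le> G" and W: "\<And>k. \<bar>W k\<bar> \<le> B"
  defines "\<psi> \<equiv> (\<lambda>j. if lo \<le> j \<and> j \<le> hi then \<phi> j else 0)"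
  shows "(\<lambda>k. schr W \<psi> k - E * \<psi> k) \<in> l2"
    "l2norm (\<lambda>k. schr W \<psi> k - E * \<psi> k) \<le> 2 * ((2 + B + cmod E) * G)"
proof -
  define f where "f = (\<lambda>k. schr W \<psi> k - E * \<psi> k)"
  define M where "M = (2 + B + cmod E) * G"
  have G: "0 \<le> G" using \<phi>[of 0] norm_ge_zero order_trans by blast
  have f0: "f k = 0" if "k \<notin> {lo - 1, lo, hi, hi + 1}" for k
    using schr_minus_truncation[OF eig that] by (simp add: f_def \<psi>_def)
  have "cmod (\<psi> j) \<le> G" for j using \<phi>[of j] G by (simp add: \<psi>_def)
  then have fM: "cmod (f k) \<le> M" for k unfolding f_def M_def by (rule norm_schr_minus_le[OF _ W])
  note f = l2sq_le_card_support[of "{lo - 1, lo, hi, hi + 1}" f M, OF _ f0 fM]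
  have "real (card {lo - 1, lo, hi, hi + 1}) \<le> 4" by (auto simp: card_insert_if)
  with f(2) have "l2sq f \<le> (2 * M)^2" by (simp add: power_mult_distrib mult_right_mono order_trans)
  moreover have "0 \<le> M" using G W[of 0] by (simp add: M_def)
  ultimately show "f \<in> l2" "l2norm f \<le> 2 * M" using f(1) by (simp_all add: l2norm_le_iff_l2sq_le)
qed

lemma band_weyl_sequence:
  assumes "E \<in> band u v"
  obtains \<gamma> Q where "0 < \<gamma>"
    and "\<And>a L. \<exists>\<psi>\<in>l2. (\<forall>k. \<psi> k \<noteq> 0 \<longrightarrow> 2 * a \<le> k \<and> k \<le> 2 * a + 2 * int L + 1)
      \<and> l2sq \<psi> = (real L + 1) * \<gamma> \<and> (\<lambda>k. schr (xab u v) \<psi> k - E * \<psi> k) \<in> l2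
      \<and> l2norm (\<lambda>k. schr (xab u v) \<psi> k - E * \<psi> k) \<le> Q"
proof -
  obtain \<phi> \<alpha> \<beta> where ab: "\<alpha> \<noteq> 0 \<or> \<beta> \<noteq> 0"
    and \<phi>: "\<And>j. cmod (\<phi> (2 * j)) = cmod \<alpha>" "\<And>j. cmod (\<phi> (2 * j + 1)) = cmod \<beta>"
    and eig: "\<And>k. schr (xab u v) \<phi> k = E * \<phi> k"
    using bloch_solution[OF assms] by blast
  define G where "G = max (cmod \<alpha>) (cmod \<beta>)"
  have \<phi>_G: "cmod (\<phi> k) \<le> G" for k
    by (cases "even k") (auto simp: G_def elim!: evenE oddE simp: \<phi>)
  have xab: "\<bar>xab u v k\<bar> \<le> \<bar>u\<bar> + \<bar>v\<bar>" for k by (simp add: xab_def)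
  define \<gamma> where "\<gamma> = (cmod \<alpha>)^2 + (cmod \<beta>)^2"
  have "0 < \<gamma>" using ab by (auto simp: \<gamma>_def add_pos_nonneg add_nonneg_pos)
  moreover have "\<exists>\<psi>\<in>l2. (\<forall>k. \<psi> k \<noteq> 0 \<longrightarrow> 2 * a \<le> k \<and> k \<le> 2 * a + 2 * int L + 1)
      \<and> l2sq \<psi> = (real L + 1) * \<gamma> \<and> (\<lambda>k. schr (xab u v) \<psi> k - E * \<psi> k) \<in> l2
      \<and> l2norm (\<lambda>k. schr (xab u v) \<psi> k - E * \<psi> k) \<le> 2 * ((2 + (\<bar>u\<bar> + \<bar>v\<bar>) + cmod E) * G)"
    for a L
  proof -
    define hi where "hi = 2 * a + 2 * int L + 1"
    define \<psi> where "\<psi> = (\<lambda>j. if 2 * a \<le> j \<and> j \<le> hi then \<phi> j else 0)"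
    have supp: "\<psi> k = 0" if "k \<notin> {2 * a..hi}" for k using that by (auto simp: \<psi>_def)
    have \<psi>: "\<psi> \<in> l2" "l2sq \<psi> = (\<Sum>k = 2 * a..hi. (cmod (\<psi> k))^2)"
      using l2_finite_support[of "{2 * a..hi}" \<psi>] supp by auto
    have "(\<Sum>k = 2 * a..hi. (cmod (\<psi> k))^2) = (\<Sum>k = 2 * a..hi. (cmod (\<phi> k))^2)"
      by (rule sum.cong) (auto simp: \<psi>_def)
    then have "l2sq \<psi> = (\<Sum>k = 2 * a..hi. (cmod (\<phi> k))^2)" using \<psi>(2) by (rule trans[rotated])
    also have "\<dots> = (real L + 1) * \<gamma>"
      unfolding hi_def sum_int_interval_pairs by (simp add: \<phi> \<gamma>_def)
    finally have sq: "l2sq \<psi> = (real L + 1) * \<gamma>" .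
    have "(\<lambda>k. schr (xab u v) \<psi> k - E * \<psi> k) \<in> l2"
      "l2norm (\<lambda>k. schr (xab u v) \<psi> k - E * \<psi> k) \<le> 2 * ((2 + (\<bar>u\<bar> + \<bar>v\<bar>) + cmod E) * G)"
      unfolding \<psi>_def by (rule l2norm_schr_minus_truncation_le[OF eig \<phi>_G xab])+
    moreover have "\<forall>k. \<psi> k \<noteq> 0 \<longrightarrow> 2 * a \<le> k \<and> k \<le> 2 * a + 2 * int L + 1"
      using supp by (auto simp: hi_def)
    ultimately show ?thesis using \<psi>(1) sq by (intro bexI[of _ \<psi>]) auto
  qed
  ultimately show ?thesis using that by blast
qed

lemma l2norm_le_resolvent_bound:
  assumes "E \<notin> spectrum_op T"
  obtains C where "\<And>\<psi>. \<psi> \<in> l2 \<Longrightarrow> (\<lambda>k. T \<psi> k - E * \<psi> k) \<in> l2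
    \<Longrightarrow> l2norm \<psi> \<le> C * l2norm (\<lambda>k. T \<psi> k - E * \<psi> k)"
proof -
  obtain R C where R: "\<And>\<psi>. \<psi> \<in> l2 \<Longrightarrow> R (\<lambda>k. T \<psi> k - E * \<psi> k) = \<psi>"
    and C: "\<And>\<psi>. \<psi> \<in> l2 \<Longrightarrow> l2norm (R \<psi>) \<le> C * l2norm \<psi>"
    using assms unfolding spectrum_op_def by blast
  show ?thesis by (rule that[of C]) (metis R C)
qed

(* Windows start at even sites, so that period-two patterns are matched in phase. *)
definition agrees_on_long_windows :: "(int \<Rightarrow> 'a) \<Rightarrow> (int \<Rightarrow> 'a) \<Rightarrow> bool" where
  "agrees_on_long_windows x y \<longleftrightarrow> (\<forall>L::nat. \<exists>t. \<forall>k. 2 * t \<le> k \<and> k \<le> 2 * t + int L \<longrightarrow> x k = y k)"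

lemma band_subset_spectrum_schr:
  assumes "agrees_on_long_windows V (xab u v)"
  shows "band u v \<subseteq> spectrum_op (schr V)"
proof
  fix E assume E: "E \<in> band u v"
  show "E \<in> spectrum_op (schr V)"
  proof (rule ccontr)
    assume "E \<notin> spectrum_op (schr V)"
    then obtain C where C: "\<And>\<psi>. \<psi> \<in> l2 \<Longrightarrow> (\<lambda>k. schr V \<psi> k - E * \<psi> k) \<in> l2
        \<Longrightarrow> l2norm \<psi> \<le> C * l2norm (\<lambda>k. schr V \<psi> k - E * \<psi> k)"
      by (rule l2norm_le_resolvent_bound) blast
    obtain \<gamma> Q where \<gamma>: "0 < \<gamma>" and weyl: "\<And>a L. \<exists>\<psi>\<in>l2. (\<forall>k. \<psi> k \<noteq> 0 \<longrightarrow> 2 * a \<le> k \<and> k \<le> 2 * a + 2 * int L + 1)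
      \<and> l2sq \<psi> = (real L + 1) * \<gamma> \<and> (\<lambda>k. schr (xab u v) \<psi> k - E * \<psi> k) \<in> l2
      \<and> l2norm (\<lambda>k. schr (xab u v) \<psi> k - E * \<psi> k) \<le> Q"
      using band_weyl_sequence[OF E] by blast
    obtain L :: nat where L: "(\<bar>C\<bar> * Q)^2 / \<gamma> < real L" using reals_Archimedean2 by blast
    obtain t where t: "\<And>k. 2 * t \<le> k \<Longrightarrow> k \<le> 2 * t + int (2 * L + 1) \<Longrightarrow> V k = xab u v k"
      using assms unfolding agrees_on_long_windows_def by blast
    obtain \<psi> where \<psi>: "\<psi> \<in> l2" "\<And>k. \<psi> k \<noteq> 0 \<Longrightarrow> 2 * t \<le> k \<and> k \<le> 2 * t + 2 * int L + 1"
      and sq: "l2sq \<psi> = (real L + 1) * \<gamma>"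
      and f: "(\<lambda>k. schr (xab u v) \<psi> k - E * \<psi> k) \<in> l2" "l2norm (\<lambda>k. schr (xab u v) \<psi> k - E * \<psi> k) \<le> Q"
      using weyl[of t L] by blast
    have "of_real (V k) * \<psi> k = of_real (xab u v k) * \<psi> k" for k
      using t[of k] \<psi>(2)[of k] by (cases "\<psi> k = 0") auto
    then have "schr V \<psi> = schr (xab u v) \<psi>" by (simp add: schr_def fun_eq_iff)
    then have "l2norm \<psi> \<le> C * l2norm (\<lambda>k. schr (xab u v) \<psi> k - E * \<psi> k)" using C[OF \<psi>(1)] f(1) by simp
    also have "\<dots> \<le> \<bar>C\<bar> * Q"
      using f(2) l2norm_nonneg by (metis abs_ge_self abs_ge_zero mult_mono order_trans)
    finally have "l2sq \<psi> \<le> (\<bar>C\<bar> * Q)^2" using l2norm_nonneg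
      by (metis l2sq_eq_l2norm_sq power_mono)
    with sq L \<gamma> show False by (simp add: divide_less_eq algebra_simps)
  qed
qed

lemma spectrum_schr_subset_bands:
  assumes fin: "finite (range V)"
  shows "spectrum_op (schr V) \<subseteq> (\<Union>j. \<Union>l. band (V (2 * j)) (V (2 * l + 1)))"
proof
  fix E assume E: "E \<in> spectrum_op (schr V)"
  have "finite (range (\<lambda>k. \<bar>V k\<bar>))" using fin by (metis image_image finite_imageI)
  then obtain B where "\<And>k. \<bar>V k\<bar> \<le> B" using finite_range_imp_bounded by blast
  then have "Im E = 0" using nonreal_not_in_spectrum_schr E by blast
  then have E_real: "E = of_real (Re E)" by (simp add: complex_eq_iff)
  show "E \<in> (\<Union>j. \<Union>l. band (V (2 * j)) (V (2 * l + 1)))"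
  proof (rule ccontr)
    assume out: "E \<notin> (\<Union>j. \<Union>l. band (V (2 * j)) (V (2 * l + 1)))"
    have "(Re E - V k) * (Re E - V (k + 1)) < 0 \<or> 4 < (Re E - V k) * (Re E - V (k + 1))" for k
    proof -
      obtain j l where "(Re E - V k) * (Re E - V (k + 1)) = (Re E - V (2 * j)) * (Re E - V (2 * l + 1))"
      proof (cases "even k")
        case True
        then show ?thesis by (intro that[of "k div 2" "k div 2"]) auto
      next
        case False
        then obtain b where k: "k = 2 * b + 1" by (auto elim: oddE)
        then have "k + 1 = 2 * (b + 1)" by simp
        with k show ?thesis by (intro that[of "b + 1" b]) (simp only: mult.commute)
      qed
      moreover have "E \<notin> band (V (2 * j)) (V (2 * l + 1))" using out by blast
      ultimately show ?thesis
        by (subst (asm) E_real) (auto simp: band_def simp flip: of_real_diff of_real_mult)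
    qed
    with E E_real show False using real_not_in_spectrum_schr_finite_range[OF fin] by metis
  qed
qed

lemma spectrum_schr_xab: "spectrum_op (schr (xab u v)) = band u v"
proof
  have "finite (range (xab u v))" by (rule finite_subset[of _ "{u, v}"]) (auto simp: xab_def)
  from spectrum_schr_subset_bands[OF this] show "spectrum_op (schr (xab u v)) \<subseteq> band u v"
    by (simp add: xab_def)
  show "band u v \<subseteq> spectrum_op (schr (xab u v))"
    by (rule band_subset_spectrum_schr) (auto simp: agrees_on_long_windows_def)
qed

lemma indep_vars_coordinates_PiM:
  assumes "prob_space M"
  shows "prob_space.indep_vars (PiM (UNIV :: 'i set) (\<lambda>_. M)) (\<lambda>_. M) (\<lambda>i x. x i) UNIV"
proof -
  interpret product_prob_space "\<lambda>_. M" "UNIV :: 'i set"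
    by (rule product_prob_spaceI) (rule assms)
  let ?P = "PiM (UNIV :: 'i set) (\<lambda>_. M)"
  have "distr ?P M (\<lambda>x. x i) = M" for i by (rule distr_PiM_component) (auto simp: assms)
  then have "(\<Pi>\<^sub>M i\<in>UNIV. distr ?P M (\<lambda>x. x i)) = ?P" by (intro PiM_cong) auto
  moreover have "distr ?P (\<Pi>\<^sub>M i\<in>UNIV. M) (\<lambda>x. \<lambda>i\<in>UNIV. x i) = ?P"
    unfolding restrict_UNIV by simp
  moreover have "prob_space.indep_vars ?P (\<lambda>_. M) (\<lambda>i x. x i) UNIV \<longleftrightarrow>
      distr ?P (\<Pi>\<^sub>M i\<in>UNIV. M) (\<lambda>x. \<lambda>i\<in>UNIV. x i) = (\<Pi>\<^sub>M i\<in>UNIV. distr ?P M (\<lambda>x. x i))"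
    by (rule prob_space.indep_vars_iff_distr_eq_PiM'[OF P.prob_space_axioms])
      (simp, rule measurable_component_singleton, simp)
  ultimately show ?thesis by simp
qed

lemma (in prob_space) prob_INT_indep_events_eq_0:
  assumes indep: "indep_events B (UNIV :: nat set)" and q: "\<And>j. prob (B j) \<le> q" "q < 1"
  shows "prob (\<Inter>j. B j) = 0"
proof -
  have events: "B j \<in> events" for j using indep by (auto simp: indep_events_def)
  have q0: "0 \<le> q" using q(1)[of 0] measure_nonneg[of M "B 0"] by linarith
  have "prob (\<Inter>j. B j) \<le> q ^ n" for n
  proof -
    have "prob (\<Inter>j. B j) \<le> prob (\<Inter>j\<in>{..n}. B j)"
      using events by (intro finite_measure_mono) auto
    also have "\<dots> = (\<Prod>j\<in>{..n}. prob (B j))"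
      using indep by (auto simp: indep_events_def)
    also have "\<dots> \<le> q ^ Suc n"
      using q(1) by (metis (no_types) card_atMost prod_constant prod_mono measure_nonneg)
    also have "\<dots> \<le> q ^ n" using q0 q(2) by (simp add: mult_left_le_one_le)
    finally show ?thesis .
  qed
  moreover have "(\<lambda>n. q ^ n) \<longlonglongrightarrow> 0" using q0 q(2) by (intro LIMSEQ_power_zero) auto
  ultimately have "prob (\<Inter>j. B j) \<le> 0" by (intro LIMSEQ_le_const) auto
  then show ?thesis using measure_nonneg[of M "\<Inter>j. B j"] by linarith
qed

lemma measure_PiM_mismatch:
  fixes p :: "'a pmf" and w :: "'i \<Rightarrow> 'a"
  assumes K: "finite K"
  shows "measure (PiM UNIV (\<lambda>_. measure_pmf p)) {x. \<exists>m\<in>K. x m \<noteq> w m} = 1 - (\<Prod>m\<in>K. pmf p (w m))"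
proof -
  interpret product_prob_space "\<lambda>_. measure_pmf p" "UNIV :: 'i set"
    by (rule product_prob_spaceI) (rule prob_space_measure_pmf)
  define S where "S = prod_emb UNIV (\<lambda>_. measure_pmf p) K (\<Pi>\<^sub>E m\<in>K. {w m})"
  have S: "S \<in> P.events" unfolding S_def by (intro measurable_prod_emb sets_PiM_I_finite K) auto
  have "{x. \<exists>m\<in>K. x m \<noteq> w m} = space (PiM UNIV (\<lambda>_. measure_pmf p)) - S"
    by (auto simp: S_def prod_emb_def PiE_iff space_PiM)
  moreover have "P.prob S = (\<Prod>m\<in>K. pmf p (w m))"
    unfolding S_def by (subst measure_PiM_emb) (auto simp: K measure_pmf_single)
  ultimately show ?thesis using P.prob_compl[OF S] by simp
qed

lemma disjoint_family_even_windows: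
  fixes L :: nat
  shows "disjoint_family (\<lambda>j::nat. {2 * (int j * (int L + 1)) .. 2 * (int j * (int L + 1)) + int L})"
  unfolding disjoint_family_on_def
proof (intro ballI impI)
  fix i j :: nat assume "i \<noteq> j"
  have "m div (2 * (int L + 1)) = int j"
    if "m \<in> {2 * (int j * (int L + 1)) .. 2 * (int j * (int L + 1)) + int L}" for m j
  proof (rule int_div_pos_eq)
    show "m = 2 * (int L + 1) * int j + (m - 2 * (int j * (int L + 1)))" by (simp add: algebra_simps)
  qed (use that in auto)
  with \<open>i \<noteq> j\<close> show "{2 * (int i * (int L + 1)) .. 2 * (int i * (int L + 1)) + int L}
      \<inter> {2 * (int j * (int L + 1)) .. 2 * (int j * (int L + 1)) + int L} = {}"
    by (metis disjoint_iff of_nat_eq_iff)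
qed

lemma indep_events_mismatch:
  fixes p :: "'a pmf" and w :: "'i \<Rightarrow> 'a" and K :: "'j \<Rightarrow> 'i set"
  assumes disj: "disjoint_family K" and fin: "\<And>j. finite (K j)"
  shows "prob_space.indep_events (PiM UNIV (\<lambda>_. measure_pmf p)) (\<lambda>j. {x. \<exists>m\<in>K j. x m \<noteq> w m}) UNIV"
proof -
  interpret product_prob_space "\<lambda>_. measure_pmf p" "UNIV :: 'i set"
    by (rule product_prob_spaceI) (rule prob_space_measure_pmf)
  have space: "space (PiM UNIV (\<lambda>_. measure_pmf p)) = UNIV" by (simp add: space_PiM)
  have "P.indep_vars (\<lambda>j. PiM (K j) (\<lambda>_. measure_pmf p)) (\<lambda>j x. restrict (\<lambda>i. x i) (K j)) UNIV"
    by (rule P.indep_vars_restrict[OF indep_vars_coordinates_PiM[OF prob_space_measure_pmf]])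
      (use disj in auto)
  moreover have "{y \<in> space (PiM (K j) (\<lambda>_. measure_pmf p)). \<exists>m\<in>K j. y m \<noteq> w m}
      \<in> sets (PiM (K j) (\<lambda>_. measure_pmf p))" for j
  proof -
    have "{y \<in> space (PiM (K j) (\<lambda>_. measure_pmf p)). \<exists>m\<in>K j. y m \<noteq> w m}
        = space (PiM (K j) (\<lambda>_. measure_pmf p)) - (\<Pi>\<^sub>E m\<in>K j. {w m})"
      by (auto simp: space_PiM PiE_iff extensional_def)
    also have "\<dots> \<in> sets (PiM (K j) (\<lambda>_. measure_pmf p))"
      by (intro sets.compl_sets sets_PiM_I_finite fin) auto
    finally show ?thesis .
  qed
  ultimately have "P.indep_events (\<lambda>j. {x \<in> space (PiM UNIV (\<lambda>_. measure_pmf p)).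
      \<exists>m\<in>K j. restrict (\<lambda>i. x i) (K j) m \<noteq> w m}) UNIV"
    by (rule P.indep_eventsI_indep_vars)
  then show ?thesis by (simp add: space cong: conj_cong)
qed

lemma AE_matching_window:
  fixes p :: "'a::finite pmf" and w :: "int \<Rightarrow> 'a" and L :: nat
  assumes pos: "\<And>a. 0 < pmf p a"
  shows "AE x in PiM UNIV (\<lambda>_. measure_pmf p). \<exists>t. \<forall>k. 2 * t \<le> k \<and> k \<le> 2 * t + int L \<longrightarrow> x k = w k"
proof -
  interpret product_prob_space "\<lambda>_. measure_pmf p" "UNIV :: int set"
    by (rule product_prob_spaceI) (rule prob_space_measure_pmf)
  define K where "K j = {2 * (int j * (int L + 1)) .. 2 * (int j * (int L + 1)) + int L}" for j :: nat
  define B where "B j = {x. \<exists>m\<in>K j. x m \<noteq> w m}" for j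
  have indep: "P.indep_events B UNIV"
    unfolding B_def[abs_def] by (rule indep_events_mismatch) (auto simp: K_def disjoint_family_even_windows)
  define \<pi> where "\<pi> = Min (range (pmf p))"
  have \<pi>: "0 < \<pi>" "\<And>a. \<pi> \<le> pmf p a" using pos by (auto simp: \<pi>_def Min_gr_iff)
  have "P.prob (B j) \<le> 1 - \<pi> ^ (L + 1)" for j
  proof -
    have "card (K j) = L + 1" by (simp add: K_def)
    then have "\<pi> ^ (L + 1) = (\<Prod>m\<in>K j. \<pi>)" by simp
    also have "\<dots> \<le> (\<Prod>m\<in>K j. pmf p (w m))" using \<pi> by (intro prod_mono) (auto intro: less_imp_le)
    finally show ?thesis unfolding B_def by (subst measure_PiM_mismatch) (auto simp: K_def)
  qed
  moreover have "1 - \<pi> ^ (L + 1) < 1" using \<pi>(1) by simp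
  ultimately have "P.prob (\<Inter>j. B j) = 0" by (rule P.prob_INT_indep_events_eq_0[OF indep])
  moreover have "(\<Inter>j. B j) \<in> P.events" using indep by (auto simp: P.indep_events_def)
  ultimately have "(\<Inter>j. B j) \<in> null_sets (PiM UNIV (\<lambda>_. measure_pmf p))"
    by (simp add: P.emeasure_eq_measure null_sets_def)
  then show ?thesis
  proof (rule AE_I')
    show "{x \<in> space (PiM UNIV (\<lambda>_. measure_pmf p)). \<not> (\<exists>t. \<forall>k. 2 * t \<le> k \<and> k \<le> 2 * t + int L \<longrightarrow> x k = w k)}
        \<subseteq> (\<Inter>j. B j)"
      by (force simp: B_def K_def)
  qed
qed

lemma AE_agrees_on_long_windows:
  fixes p :: "'a::finite pmf" and w :: "int \<Rightarrow> 'a"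
  assumes "\<And>a. 0 < pmf p a"
  shows "AE x in PiM UNIV (\<lambda>_. measure_pmf p). agrees_on_long_windows x w"
  unfolding agrees_on_long_windows_def AE_all_countable using AE_matching_window[OF assms] by blast

lemma period_two_eq_xab:
  assumes per: "\<And>k. f (k + 2) = f k"
  shows "f = xab (f 0) (f 1)"
proof -
  have shift: "f (r + 2 * j) = f r" for r j :: int
  proof (induction j rule: int_induct[where k = 0])
    case (step1 j)
    then show ?case using per[of "r + 2 * j"] by (simp add: algebra_simps)
  next
    case (step2 j)
    then show ?case using per[of "r + 2 * (j - 1)"] by (simp add: algebra_simps)
  qed simp
  have "f k = xab (f 0) (f 1) k" for k
  proof -
    have "f k = f (k mod 2)" using shift[of "k mod 2" "k div 2"] by simp
    moreover have "k mod 2 = (if even k then 0 else 1)" by presburger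
    ultimately show ?thesis by (simp add: xab_def)
  qed
  then show ?thesis by blast
qed

lemma xab_shift_period_two: "xab a b (k + 2) = xab a b k"
  by (simp add: xab_def)

lemma xab_realizes_pair: "\<exists>a b. xab a b n = c1 \<and> xab a b (n + 1) = c2"
  by (cases "even n") (auto simp: xab_def intro!: exI[of _ c1] exI[of _ c2])

lemma agrees_on_long_windows_shift:
  assumes "agrees_on_long_windows x y"
  shows "agrees_on_long_windows (\<lambda>k. x (k + n)) (\<lambda>k. y (k + n))"
  unfolding agrees_on_long_windows_def
proof
  fix L :: nat
  obtain t where t: "\<And>k. 2 * t \<le> k \<Longrightarrow> k \<le> 2 * t + int (L + 3) \<Longrightarrow> x k = y k"
    using assms unfolding agrees_on_long_windows_def by blast
  have "2 * t \<le> k + n \<and> k + n \<le> 2 * t + int (L + 3)"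
    if "2 * (t - n div 2 + 1) \<le> k" "k \<le> 2 * (t - n div 2 + 1) + int L" for k
    using that by presburger
  with t show "\<exists>t'. \<forall>k. 2 * t' \<le> k \<and> k \<le> 2 * t' + int L \<longrightarrow> x (k + n) = y (k + n)" by blast
qed

lemma agrees_on_long_windows_map:
  "agrees_on_long_windows x y \<Longrightarrow> agrees_on_long_windows (\<lambda>k. f k (x k)) (\<lambda>k. f k (y k))"
  unfolding agrees_on_long_windows_def by metis

(* The potential f1 (S^k x) + Vper k of the statement, with f1 x = g (x n). *)
definition local_potential :: "('a \<Rightarrow> real) \<Rightarrow> int \<Rightarrow> (int \<Rightarrow> real) \<Rightarrow> (int \<Rightarrow> 'a) \<Rightarrow> int \<Rightarrow> real" where
  "local_potential g n Vper x k = g (x (k + n)) + Vper k"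

lemma local_potential_xab:
  assumes per: "\<forall>k. Vper (k + 2) = Vper k"
  shows "local_potential g n Vper (xab a b) = xab (g (xab a b n) + Vper 0) (g (xab a b (n + 1)) + Vper 1)"
proof -
  have "local_potential g n Vper (xab a b) (k + 2) = local_potential g n Vper (xab a b) k" for k
    using xab_shift_period_two[of a b "k + n"] per by (simp add: local_potential_def algebra_simps)
  from period_two_eq_xab[where f = "local_potential g n Vper (xab a b)", OF this] show ?thesis by (simp add: local_potential_def add.commute)
qed

lemma spectrum_schr_local_potential_xab:
  assumes "\<forall>k. Vper (k + 2) = Vper k"
  shows "spectrum_op (schr (local_potential g n Vper (xab a b)))
    = band (g (xab a b n) + Vper 0) (g (xab a b (n + 1)) + Vper 1)"
  by (simp add: local_potential_xab[OF assms] spectrum_schr_xab)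

lemma spectrum_schr_local_potential_subset:
  fixes g :: "'a::finite \<Rightarrow> real"
  assumes per: "\<forall>k. Vper (k + 2) = Vper k"
  shows "spectrum_op (schr (local_potential g n Vper x))
    \<subseteq> (\<Union>a b. spectrum_op (schr (local_potential g n Vper (xab a b))))"
proof -
  have Vper: "Vper k = (if even k then Vper 0 else Vper 1)" for k
    using period_two_eq_xab[of Vper] per by (metis xab_def)
  have "range (local_potential g n Vper x) \<subseteq> (\<lambda>(c, r). g c + r) ` (UNIV \<times> {Vper 0, Vper 1})"
  proof (rule image_subsetI)
    fix k
    show "local_potential g n Vper x k \<in> (\<lambda>(c, r). g c + r) ` (UNIV \<times> {Vper 0, Vper 1})"
      using Vper[of k] by (auto simp: local_potential_def image_iff)
  qed
  then have "finite (range (local_potential g n Vper x))" by (rule finite_subset) simp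
  then have "spectrum_op (schr (local_potential g n Vper x))
      \<subseteq> (\<Union>j l. band (local_potential g n Vper x (2 * j)) (local_potential g n Vper x (2 * l + 1)))"
    by (rule spectrum_schr_subset_bands)
  also have "\<dots> \<subseteq> (\<Union>a b. spectrum_op (schr (local_potential g n Vper (xab a b))))"
  proof (intro UN_least)
    fix j l
    obtain a b where ab: "xab a b n = x (2 * j + n)" "xab a b (n + 1) = x (2 * l + 1 + n)"
      using xab_realizes_pair[of n "x (2 * j + n)" "x (2 * l + 1 + n)"] by blast
    have "local_potential g n Vper x (2 * j) = g (xab a b n) + Vper 0"
      using ab(1) Vper[of "2 * j"] by (simp add: local_potential_def)
    moreover have "local_potential g n Vper x (2 * l + 1) = g (xab a b (n + 1)) + Vper 1"
      using ab(2) Vper[of "2 * l + 1"] by (simp add: local_potential_def)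
    ultimately have "band (local_potential g n Vper x (2 * j)) (local_potential g n Vper x (2 * l + 1))
        = spectrum_op (schr (local_potential g n Vper (xab a b)))"
      by (simp only: spectrum_schr_local_potential_xab[OF per])
    then show "band (local_potential g n Vper x (2 * j)) (local_potential g n Vper x (2 * l + 1))
        \<subseteq> (\<Union>a b. spectrum_op (schr (local_potential g n Vper (xab a b))))" by blast
  qed
  finally show ?thesis .
qed

lemma spectrum_schr_local_potential_supset:
  assumes per: "\<forall>k. Vper (k + 2) = Vper k" and x: "agrees_on_long_windows x (xab a b)"
  shows "spectrum_op (schr (local_potential g n Vper (xab a b))) \<subseteq> spectrum_op (schr (local_potential g n Vper x))"
proof -
  have "agrees_on_long_windows (local_potential g n Vper x) (local_potential g n Vper (xab a b))"
    using agrees_on_long_windows_map[OF agrees_on_long_windows_shift[OF x], of "\<lambda>k c. g c + Vper k"]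
    by (simp add: local_potential_def[abs_def])
  then show ?thesis
    unfolding local_potential_xab[OF per] spectrum_schr_xab by (rule band_subset_spectrum_schr)
qed

lemma spectrum_schr_local_potential_eq:
  fixes g :: "'a::finite \<Rightarrow> real"
  assumes per: "\<forall>k. Vper (k + 2) = Vper k" and x: "\<And>a b. agrees_on_long_windows x (xab a b)"
  shows "spectrum_op (schr (local_potential g n Vper x))
    = (\<Union>a b. spectrum_op (schr (local_potential g n Vper (xab a b))))"
proof (rule subset_antisym)
  show "(\<Union>a b. spectrum_op (schr (local_potential g n Vper (xab a b))))
      \<subseteq> spectrum_op (schr (local_potential g n Vper x))"
    by (intro UN_least spectrum_schr_local_potential_supset[OF per x])
qed (rule spectrum_schr_local_potential_subset[OF per])

theorem theorem1p4:
  fixes p :: "'a::finite pmf" and g :: "'a \<Rightarrow> real" and n :: int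
    and Vper :: "int \<Rightarrow> real"
  assumes "\<forall>a. pmf p a > 0"
    and "\<forall>k. Vper (k + 2) = Vper k"
  defines "f1 \<equiv> (\<lambda>x::int \<Rightarrow> 'a. g (x n))"
  defines "H \<equiv> (\<lambda>x \<psi>. (\<lambda>k. laplacian \<psi> k + mult_op (\<lambda>j. f1 (Sshift j x)) \<psi> k))"
  shows "AE x in PiM (UNIV :: int set) (\<lambda>_. measure_pmf p).
           spectrum_op (\<lambda>\<psi> k. H x \<psi> k + mult_op Vper \<psi> k)
           = (\<Union>a. \<Union>b. spectrum_op (\<lambda>\<psi> k. H (xab a b) \<psi> k + mult_op Vper \<psi> k))"
proof -
  have H: "(\<lambda>\<psi> k. H y \<psi> k + mult_op Vper \<psi> k) = schr (local_potential g n Vper y)" for y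
    by (simp add: fun_eq_iff H_def f1_def laplacian_def mult_op_def Sshift_def schr_def
        local_potential_def algebra_simps add.commute[of n])
  have "AE x in PiM UNIV (\<lambda>_. measure_pmf p). \<forall>a\<in>UNIV. \<forall>b\<in>UNIV. agrees_on_long_windows x (xab a b)"
    using assms(1) by (intro AE_finite_allI AE_agrees_on_long_windows) auto
  then show ?thesis
    unfolding H by (rule eventually_mono) (simp add: spectrum_schr_local_potential_eq[OF assms(2)])
qed

end
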